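(* Let $n\geq 1$ and let $\varphi:[0,\infty)\to[0,\infty)$ be a continuous function such that $\varphi(|\mathbf{k}|)>0$ for almost every $\mathbf{k}\in\mathbf{R}_{n}$ and \[ \int_{0}^{\infty}\frac{k^{n-1}}{(1+\varphi(k))^{2}}\,dk<\infty . \] Let $A$ be the operator of multiplication by $\varphi(|\mathbf{k}|)$ in $\mathbb{L}_{2}(\mathbf{R}_{n})$ with domain $\mathcal{D}(A)=\{f\in\mathbb{L}_{2}(\mathbf{R}_{n}):\ \int_{\mathbf{R}_{n}}(1+\varphi(|\mathbf{k}|))^{2}|f(\mathbf{k})|^{2}d\mathbf{k}<\infty\}$, and let $A_{0}$ be the restriction of $A$ to \[ \mathcal{D}_{0}(A)=\Big\{f\in\mathcal{D}(A):\ \int_{\mathbf{R}_{n}}f(\mathbf{k})\,d\mathbf{k}=0\Big\}. \] Then $A$ is the unique non-negative self-adjoint extension of $A_{0}$ in $\mathbb{L}_{2}(\mathbf{R}_{n})$ (i.e. $A$ has no non-negative singular perturbations) if and only if \[ \int_{0}^{\infty}\frac{k^{n-1}}{\varphi(k)(1+\varphi(k))}\,dk=\infty\qquad\text{and}\qquad\int_{0}^{\infty}\frac{k^{n-1}}{1+\varphi(k)}\,dk=\infty . \]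
   Context: A singular perturbation of $A$ is a self-adjoint extension of $A_{0}$ in $\mathbb{L}_{2}(\mathbf{R}_{n})$ other than $A$. The functional $f\mapsto\int_{\mathbf{R}_{n}}f(\mathbf{k})d\mathbf{k}$ is well defined on $\mathcal{D}(A)$ under the integrability hypothesis. *)

theory Defs
  imports "HOL-Analysis.Analysis"
begin

text \<open>Elements of L2(R_n) are represented by measurable complex functions on real^'n,
  with square-integrable modulus; operators are represented by their graphs
  (relations), considered modulo equality almost everywhere.\<close>

definition L2 :: "(real^'n \<Rightarrow> complex) set" where
  "L2 = {f. f \<in> borel_measurable lebesgue \<and> integrable lebesgue (\<lambda>k. (cmod (f k))\<^sup>2)}"

definition L2_inner :: "(real^'n \<Rightarrow> complex) \<Rightarrow> (real^'n \<Rightarrow> complex) \<Rightarrow> complex" where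
  "L2_inner f g = (LINT k|lebesgue. cnj (f k) * g k)"

definition is_operator :: "((real^'n \<Rightarrow> complex) \<times> (real^'n \<Rightarrow> complex)) set \<Rightarrow> bool" where
  "is_operator T \<longleftrightarrow> T \<subseteq> L2 \<times> L2 \<and>
     (\<forall>(f,u)\<in>T. \<forall>(g,v)\<in>T. (AE k in lebesgue. f k = g k) \<longrightarrow> (AE k in lebesgue. u k = v k))"

definition adjoint_op :: "((real^'n \<Rightarrow> complex) \<times> (real^'n \<Rightarrow> complex)) set
    \<Rightarrow> ((real^'n \<Rightarrow> complex) \<times> (real^'n \<Rightarrow> complex)) set" where
  "adjoint_op T = {(g,h). g \<in> L2 \<and> h \<in> L2 \<and> (\<forall>(f,u)\<in>T. L2_inner u g = L2_inner f h)}"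

text \<open>Self-adjoint: an operator equal to its adjoint (this forces dense domain).\<close>
definition self_adjoint_op :: "((real^'n \<Rightarrow> complex) \<times> (real^'n \<Rightarrow> complex)) set \<Rightarrow> bool" where
  "self_adjoint_op T \<longleftrightarrow> is_operator T \<and> T = adjoint_op T"

definition nonneg_op :: "((real^'n \<Rightarrow> complex) \<times> (real^'n \<Rightarrow> complex)) set \<Rightarrow> bool" where
  "nonneg_op T \<longleftrightarrow> (\<forall>(f,u)\<in>T. 0 \<le> Re (L2_inner f u))"

definition mult_dom :: "(real \<Rightarrow> real) \<Rightarrow> (real^'n \<Rightarrow> complex) set" where
  "mult_dom \<phi> = {f. f \<in> L2 \<and>
     integrable lebesgue (\<lambda>k. (1 + \<phi> (norm k))\<^sup>2 * (cmod (f k))\<^sup>2)}"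

definition mult_op :: "(real \<Rightarrow> real) \<Rightarrow> ((real^'n \<Rightarrow> complex) \<times> (real^'n \<Rightarrow> complex)) set" where
  "mult_op \<phi> = {(f,u). f \<in> mult_dom \<phi> \<and> u \<in> L2 \<and>
     (AE k in lebesgue. u k = complex_of_real (\<phi> (norm k)) * f k)}"

definition mult_op0 :: "(real \<Rightarrow> real) \<Rightarrow> ((real^'n \<Rightarrow> complex) \<times> (real^'n \<Rightarrow> complex)) set" where
  "mult_op0 \<phi> = {(f,u). (f,u) \<in> mult_op \<phi> \<and> (LINT k|lebesgue. f k) = 0}"

end

(*
  Write e = 1 / (1 + phi(|k|)) (resolvent_delta phi). For f in D(A) the functional
  f |-> integral f equals <(A + 1) f, e>, and the finiteness hypothesis says exactly that
  e is square integrable.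
  Hence A0 has deficiency indices (1, 1): the adjoint of A0 acts on D(A) + C e by
  g0 + c e |-> A g0 - c e, and the self-adjoint extensions other than A are the operators
  A_theta (singular_ext phi theta) with domain {g0 + c e : integral g0 = theta c}.

  The quadratic form of A_theta at p + e, integral p = theta, is Re <p + e, A p - e>, and
  elementary pointwise bounds on its density show that A_theta is non-negative for
  theta = - integral e when e is integrable, and for theta = integral e / phi when e / phi
  is integrable. Conversely, if neither is integrable, then for every theta there is p
  with integral p = theta and negative form: take p = e / phi on a bounded set with large
  integral of e / phi, where the density vanishes, and correct the integral by a multiple
  of 1 / phi on a far set where phi >= 3. Then a non-negative self-adjoint extension T
  cannot contain any g0 + c e with c <> 0, so T is contained in A and T = A.
  The integrals over R^n are finally reduced to radial integrals with weight r^(n-1).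
*)

theory Submission
  imports Defs
begin

section \<open>Square-integrable functions\<close>

lemma borel_measurable_cnj [measurable]:
  "f \<in> borel_measurable M \<Longrightarrow> (\<lambda>x. cnj (f x)) \<in> borel_measurable M"
  by (rule measurable_compose[of f M borel cnj borel]) (auto intro: borel_measurable_continuous_onI continuous_intros)

lemma L2_borel_measurable: "f \<in> L2 \<Longrightarrow> f \<in> borel_measurable lebesgue"
  and L2_integrable_square: "f \<in> L2 \<Longrightarrow> integrable lebesgue (\<lambda>k. (cmod (f k))\<^sup>2)"
  by (auto simp: L2_def)

lemma L2_dominated:
  assumes f: "f \<in> L2" and g: "g \<in> borel_measurable lebesgue"
    and le: "AE k in lebesgue. cmod (g k) \<le> C * cmod (f k)"
  shows "g \<in> L2"
  unfolding L2_def
proof (intro CollectI conjI g)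
  have "integrable lebesgue (\<lambda>k. C\<^sup>2 * (cmod (f k))\<^sup>2)"
    using L2_integrable_square[OF f] by simp
  then show "integrable lebesgue (\<lambda>k. (cmod (g k))\<^sup>2)"
  proof (rule Bochner_Integration.integrable_bound)
    show "(\<lambda>k. (cmod (g k))\<^sup>2) \<in> borel_measurable lebesgue" using g by measurable
    show "AE k in lebesgue. norm ((cmod (g k))\<^sup>2) \<le> norm (C\<^sup>2 * (cmod (f k))\<^sup>2)"
      using le by eventually_elim (auto simp: power_mult_distrib[symmetric] intro!: power_mono)
  qed
qed

lemma L2_cong_AE:
  "f \<in> L2 \<Longrightarrow> g \<in> borel_measurable lebesgue \<Longrightarrow> AE k in lebesgue. f k = g k \<Longrightarrow> g \<in> L2"
  by (rule L2_dominated[of f g 1]) (auto elim: eventually_mono)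

lemma L2_mult_left: "f \<in> L2 \<Longrightarrow> (\<lambda>k. c * f k) \<in> L2"
  by (rule L2_dominated[of f _ "cmod c"]) (auto simp: norm_mult dest: L2_borel_measurable)

lemma L2_add:
  assumes f: "f \<in> L2" and g: "g \<in> L2"
  shows "(\<lambda>k. f k + g k) \<in> L2"
  unfolding L2_def
proof (intro CollectI conjI)
  have [measurable]: "f \<in> borel_measurable lebesgue" "g \<in> borel_measurable lebesgue"
    using f g by (auto dest: L2_borel_measurable)
  show "(\<lambda>k. f k + g k) \<in> borel_measurable lebesgue" by measurable
  have "integrable lebesgue (\<lambda>k. 2 * (cmod (f k))\<^sup>2 + 2 * (cmod (g k))\<^sup>2)"
    using f g by (simp add: L2_integrable_square)
  then show "integrable lebesgue (\<lambda>k. (cmod (f k + g k))\<^sup>2)"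
  proof (rule Bochner_Integration.integrable_bound)
    show "(\<lambda>k. (cmod (f k + g k))\<^sup>2) \<in> borel_measurable lebesgue" by measurable
    show "AE k in lebesgue. norm ((cmod (f k + g k))\<^sup>2) \<le> norm (2 * (cmod (f k))\<^sup>2 + 2 * (cmod (g k))\<^sup>2)"
    proof (intro AE_I2)
      fix k
      have "(cmod (f k + g k))\<^sup>2 \<le> (cmod (f k) + cmod (g k))\<^sup>2"
        by (intro power_mono norm_triangle_ineq) simp
      also have "\<dots> \<le> 2 * (cmod (f k))\<^sup>2 + 2 * (cmod (g k))\<^sup>2"
        using sum_squares_bound[of "cmod (f k)" "cmod (g k)"] by (simp add: power2_sum)
      finally show "norm ((cmod (f k + g k))\<^sup>2) \<le> norm (2 * (cmod (f k))\<^sup>2 + 2 * (cmod (g k))\<^sup>2)"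
        by simp
    qed
  qed
qed

lemma L2_diff: "f \<in> L2 \<Longrightarrow> g \<in> L2 \<Longrightarrow> (\<lambda>k. f k - g k) \<in> L2"
  using L2_add[of f "\<lambda>k. -1 * g k"] L2_mult_left[of g "-1"] by simp

lemma L2_bounded_support:
  assumes f: "f \<in> borel_measurable lebesgue" and S: "S \<in> lmeasurable"
    and bound: "\<And>k. cmod (f k) \<le> C * indicator S k"
  shows "f \<in> L2"
  unfolding L2_def
proof (intro CollectI conjI f)
  have "integrable lebesgue (\<lambda>k. C\<^sup>2 * indicator S k :: real)"
    using S unfolding fmeasurable_def by auto
  then show "integrable lebesgue (\<lambda>k. (cmod (f k))\<^sup>2)"
  proof (rule Bochner_Integration.integrable_bound)
    show "(\<lambda>k. (cmod (f k))\<^sup>2) \<in> borel_measurable lebesgue" using f by measurable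
    show "AE k in lebesgue. norm ((cmod (f k))\<^sup>2) \<le> norm (C\<^sup>2 * indicator S k :: real)"
    proof (intro AE_I2)
      fix k
      show "norm ((cmod (f k))\<^sup>2) \<le> norm (C\<^sup>2 * indicator S k :: real)"
      proof (cases "k \<in> S")
        case True
        then have "(cmod (f k))\<^sup>2 \<le> C\<^sup>2"
          using bound[of k] by (intro power_mono) auto
        then show ?thesis using True by simp
      next
        case False
        then show ?thesis using bound[of k] by simp
      qed
    qed
  qed
qed

lemma integrable_cnj_mult_L2:
  assumes f: "f \<in> L2" and g: "g \<in> L2"
  shows "integrable lebesgue (\<lambda>k. cnj (f k) * g k)"
proof -
  have "integrable lebesgue (\<lambda>k. (cmod (f k))\<^sup>2 + (cmod (g k))\<^sup>2)"
    using f g by (simp add: L2_integrable_square)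
  then show ?thesis
  proof (rule Bochner_Integration.integrable_bound)
    show "(\<lambda>k. cnj (f k) * g k) \<in> borel_measurable lebesgue"
      using f g by (auto dest!: L2_borel_measurable)
    show "AE k in lebesgue. norm (cnj (f k) * g k) \<le> norm ((cmod (f k))\<^sup>2 + (cmod (g k))\<^sup>2)"
    proof (intro AE_I2)
      fix k
      have "cmod (f k) * cmod (g k) \<le> 2 * cmod (f k) * cmod (g k)"
        by simp
      also have "\<dots> \<le> (cmod (f k))\<^sup>2 + (cmod (g k))\<^sup>2"
        by (rule sum_squares_bound)
      finally show "norm (cnj (f k) * g k) \<le> norm ((cmod (f k))\<^sup>2 + (cmod (g k))\<^sup>2)"
        by (simp add: norm_mult)
    qed
  qed
qed

lemma L2_inner_cong_AE:
  assumes "f \<in> L2" "f' \<in> L2" "g \<in> L2" "g' \<in> L2"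
    and "AE k in lebesgue. f k = f' k" "AE k in lebesgue. g k = g' k"
  shows "L2_inner f g = L2_inner f' g'"
  unfolding L2_inner_def
  by (rule integral_cong_AE) (use assms in \<open>auto dest!: L2_borel_measurable\<close>)

lemma L2_inner_add_right:
  "u \<in> L2 \<Longrightarrow> g \<in> L2 \<Longrightarrow> g' \<in> L2 \<Longrightarrow>
    L2_inner u (\<lambda>k. g k + g' k) = L2_inner u g + L2_inner u g'"
  unfolding L2_inner_def distrib_left by (intro Bochner_Integration.integral_add integrable_cnj_mult_L2)

lemma L2_inner_mult_both:
  "L2_inner (\<lambda>k. c * f k) (\<lambda>k. c * g k) = of_real ((cmod c)\<^sup>2) * L2_inner f g"
proof -
  have "(\<lambda>k. cnj (c * f k) * (c * g k)) = (\<lambda>k. (cnj c * c) * (cnj (f k) * g k))"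
    by (simp add: fun_eq_iff ac_simps)
  moreover have "cnj c * c = of_real ((cmod c)\<^sup>2)"
    by (metis complex_norm_square mult.commute)
  ultimately show ?thesis
    unfolding L2_inner_def by (simp only: integral_mult_right_zero)
qed

lemma adjoint_op_antimono: "S \<subseteq> T \<Longrightarrow> adjoint_op T \<subseteq> adjoint_op S"
  unfolding adjoint_op_def by auto

lemma adjoint_opD:
  assumes "(g, h) \<in> adjoint_op T"
  shows "g \<in> L2" "h \<in> L2" "\<And>f u. (f, u) \<in> T \<Longrightarrow> L2_inner u g = L2_inner f h"
  using assms unfolding adjoint_op_def by auto

lemma adjoint_op_add:
  assumes T: "T \<subseteq> L2 \<times> L2" and gh: "(g, h) \<in> adjoint_op T" and gh': "(g', h') \<in> adjoint_op T"
  shows "(\<lambda>k. g k + g' k, \<lambda>k. h k + h' k) \<in> adjoint_op T"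
  using adjoint_opD[OF gh] adjoint_opD[OF gh'] T
  unfolding adjoint_op_def by (auto simp: L2_inner_add_right L2_add)

lemma Re_cnj_mult_of_real_mult: "Re (cnj z * (of_real a * z)) = a * (cmod z)\<^sup>2"
proof -
  have "Re (cnj z * (of_real a * z)) = a * ((Re z)\<^sup>2 + (Im z)\<^sup>2)"
    by (simp add: algebra_simps power2_eq_square)
  then show ?thesis by (simp only: cmod_power2)
qed

section \<open>Integrals over Euclidean space\<close>

lemma integrable_const_lebesgue_iff:
  "integrable (lebesgue :: 'a::euclidean_space measure) (\<lambda>_. c) \<longleftrightarrow>
    c = (0 :: 'b::{banach, second_countable_topology})"
proof
  assume "integrable lebesgue (\<lambda>_::'a. c)"
  then have "(\<integral>\<^sup>+ _. ennreal (norm c) \<partial>(lebesgue :: 'a measure)) < \<infinity>"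
    by (simp add: integrable_iff_bounded)
  then show "c = 0"
    by (auto simp: nn_integral_completion emeasure_completion ennreal_mult_top split: if_splits)
qed simp

lemma AE_le_0_if_bounded_set_integrals_eq_0:
  fixes y :: "'a::euclidean_space \<Rightarrow> real"
  assumes [measurable]: "y \<in> borel_measurable lebesgue"
    and integrals: "\<And>S. S \<in> sets lebesgue \<Longrightarrow> bounded S \<Longrightarrow>
      set_integrable lebesgue S y \<and> (LINT k:S|lebesgue. y k) = 0"
  shows "AE k in lebesgue. y k \<le> 0"
proof -
  have "AE k in lebesgue. k \<in> cball 0 (real R) \<longrightarrow> y k \<le> 0" for R :: nat
  proof -
    define S where "S = cball 0 (real R) \<inter> {k. y k > 0}"
    have "S \<in> sets lebesgue"
      unfolding S_def using lmeasurable_cball by measurable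
    then have "set_integrable lebesgue S y" "(LINT k:S|lebesgue. y k) = 0"
      using integrals[of S] by (auto simp: S_def)
    then have "AE k in lebesgue. indicator S k * y k = 0"
      unfolding set_integrable_def set_lebesgue_integral_def
      by (subst integral_nonneg_eq_0_iff_AE[symmetric]) (auto simp: S_def indicator_def)
    then show ?thesis
      by eventually_elim (auto simp: S_def indicator_def split: if_splits)
  qed
  then have "AE k in lebesgue. \<forall>R::nat. k \<in> cball 0 (real R) \<longrightarrow> y k \<le> 0"
    unfolding AE_all_countable by blast
  then show ?thesis
  proof eventually_elim
    case (elim k)
    have "k \<in> cball 0 (real (nat \<lceil>norm k\<rceil>))"
      using real_nat_ceiling_ge[of "norm k"] by simp
    then show ?case using elim by blast
  qed
qed

lemma AE_eq_0_if_bounded_set_integrals_eq_0: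
  fixes z :: "'a::euclidean_space \<Rightarrow> complex"
  assumes [measurable]: "z \<in> borel_measurable lebesgue"
    and integrals: "\<And>S. S \<in> sets lebesgue \<Longrightarrow> bounded S \<Longrightarrow>
      set_integrable lebesgue S z \<and> (LINT k:S|lebesgue. z k) = 0"
  shows "AE k in lebesgue. z k = 0"
proof -
  have "AE k in lebesgue. s * Re (z k) \<le> 0 \<and> s * Im (z k) \<le> 0" for s :: real
  proof (intro AE_conjI AE_le_0_if_bounded_set_integrals_eq_0)
    fix S :: "'a set" assume "S \<in> sets lebesgue" "bounded S"
    then have i: "integrable lebesgue (\<lambda>k. indicator S k *\<^sub>R z k)"
      and "(LINT k|lebesgue. indicator S k *\<^sub>R z k) = 0"
      using integrals unfolding set_integrable_def set_lebesgue_integral_def by auto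
    then have "integrable lebesgue (\<lambda>k. Re (indicator S k *\<^sub>R z k))"
      "(LINT k|lebesgue. Re (indicator S k *\<^sub>R z k)) = 0"
      "integrable lebesgue (\<lambda>k. Im (indicator S k *\<^sub>R z k))"
      "(LINT k|lebesgue. Im (indicator S k *\<^sub>R z k)) = 0"
      by (simp_all only: integrable_Re integrable_Im integral_Re integral_Im) simp_all
    then show "set_integrable lebesgue S (\<lambda>k. s * Re (z k)) \<and> (LINT k:S|lebesgue. s * Re (z k)) = 0"
      and "set_integrable lebesgue S (\<lambda>k. s * Im (z k)) \<and> (LINT k:S|lebesgue. s * Im (z k)) = 0"
      unfolding set_integrable_def set_lebesgue_integral_def by (simp_all add: ac_simps)
  qed measurable
  from this[of 1] this[of "-1"] show ?thesis
    by eventually_elim (simp add: complex_eq_iff)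
qed

lemma AE_eq_const_if_set_integrals:
  fixes w :: "'a::euclidean_space \<Rightarrow> complex"
  assumes [measurable]: "w \<in> borel_measurable lebesgue"
    and integrals: "\<And>S. S \<in> sets lebesgue \<Longrightarrow> bounded S \<Longrightarrow>
      set_integrable lebesgue S w \<and> (LINT k:S|lebesgue. w k) = measure lebesgue S *\<^sub>R c"
  shows "AE k in lebesgue. w k = c"
proof -
  have "AE k in lebesgue. w k - c = 0"
  proof (rule AE_eq_0_if_bounded_set_integrals_eq_0)
    fix S :: "'a set" assume S: "S \<in> sets lebesgue" "bounded S"
    then have "S \<in> lmeasurable" by (intro bounded_set_imp_lmeasurable)
    then have "set_integrable lebesgue S (\<lambda>_. c)" "(LINT k:S|lebesgue. c) = measure lebesgue S *\<^sub>R c"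
      by (auto simp: set_integrable_def fmeasurable_def set_integral_const)
    then show "set_integrable lebesgue S (\<lambda>k. w k - c) \<and> (LINT k:S|lebesgue. w k - c) = 0"
      using integrals[OF S] by simp
  qed measurable
  then show ?thesis by simp
qed

lemma sets_lebesgue_cball [measurable]: "cball (a::'a::euclidean_space) r \<in> sets lebesgue"
  using lmeasurable_cball by (rule fmeasurableD)

lemma borel_measurable_norm_lebesgue [measurable]:
  "(\<lambda>k::'a::euclidean_space. norm k) \<in> borel_measurable lebesgue"
  by (rule measurable_completion) simp

lemma unbounded_integrals_of_exhaustion:
  fixes F :: "'a \<Rightarrow> real" and S :: "nat \<Rightarrow> 'a set"
  assumes not_integrable: "\<not> integrable M F"
    and [measurable]: "F \<in> borel_measurable M" "\<And>j. S j \<in> sets M"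
    and nonneg: "\<And>x. 0 \<le> F x" and "incseq S" and cover: "\<And>x. F x \<noteq> 0 \<Longrightarrow> \<exists>j. x \<in> S j"
    and integrable: "\<And>j. integrable M (\<lambda>x. F x * indicator (S j) x)"
  obtains j where "C < (LINT x|M. F x * indicator (S j) x)"
proof -
  define f where "f j x = ennreal (F x * indicator (S j) x)" for j x
  have "incseq f"
  proof (intro incseq_SucI le_funI)
    fix j x
    have "indicator (S j) x \<le> (indicator (S (Suc j)) x :: real)"
      using \<open>incseq S\<close> by (auto simp: incseq_Suc_iff indicator_def)
    then show "f j x \<le> f (Suc j) x"
      unfolding f_def using nonneg[of x] by (intro ennreal_leI mult_left_mono) auto
  qed
  have "(\<integral>\<^sup>+ x. ennreal (F x) \<partial>M) = \<infinity>"
  proof (rule ccontr)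
    assume "(\<integral>\<^sup>+ x. ennreal (F x) \<partial>M) \<noteq> \<infinity>"
    then have "integrable M F"
      using nonneg by (intro integrableI_nonneg) (auto simp: top.not_eq_extremum)
    with not_integrable show False ..
  qed
  then have "\<infinity> = (\<integral>\<^sup>+ x. ennreal (F x) \<partial>M)" ..
  also have "\<dots> \<le> (\<integral>\<^sup>+ x. (SUP j. f j x) \<partial>M)"
  proof (intro nn_integral_mono)
    fix x
    show "ennreal (F x) \<le> (SUP j. f j x)"
    proof (cases "F x = 0")
      case False
      then obtain j where "x \<in> S j" using cover by blast
      then have "ennreal (F x) = f j x" by (simp add: f_def)
      then show ?thesis using SUP_upper[of j UNIV "\<lambda>j. f j x"] by simp
    qed simp
  qed
  also have "\<dots> = (SUP j. integral\<^sup>N M (f j))"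
    by (rule nn_integral_monotone_convergence_SUP[OF \<open>incseq f\<close>]) (unfold f_def, measurable)
  finally have SUP_eq: "(SUP j. integral\<^sup>N M (f j)) = \<infinity>"
    by (simp add: top_unique)
  have "ennreal (max C 0) < (SUP j. integral\<^sup>N M (f j))"
    by (subst SUP_eq) simp
  then obtain j where "ennreal (max C 0) < integral\<^sup>N M (f j)"
    by (auto simp: less_SUP_iff)
  moreover have "integral\<^sup>N M (f j) = ennreal (LINT x|M. F x * indicator (S j) x)"
    unfolding f_def by (rule nn_integral_eq_integral[OF integrable]) (simp add: nonneg)
  ultimately show thesis
    by (intro that[of j]) (auto simp: ennreal_less_iff)
qed

lemma emeasure_lborel_cball_max:
  "emeasure lborel (cball (0::'a::euclidean_space) r) =
    ennreal (unit_ball_vol DIM('a) * (max r 0) ^ DIM('a))"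
  by (cases "r \<ge> 0") (auto simp: emeasure_cball)

lemma emeasure_distr_norm_Ioc:
  assumes "a \<le> b"
  shows "emeasure (distr lborel borel (norm :: 'a::euclidean_space \<Rightarrow> real)) {a<..b} =
    ennreal (unit_ball_vol DIM('a) * (max b 0) ^ DIM('a) - unit_ball_vol DIM('a) * (max a 0) ^ DIM('a))"
proof -
  have "norm -` {a<..b} = cball (0::'a) b - cball 0 a" by auto
  then have "emeasure (distr lborel borel (norm :: 'a \<Rightarrow> real)) {a<..b} =
      emeasure lborel (cball (0::'a) b - cball 0 a)"
    by (subst emeasure_distr) simp_all
  also have "\<dots> = emeasure lborel (cball (0::'a) b) - emeasure lborel (cball (0::'a) a)"
    using assms by (intro emeasure_Diff) (auto simp: emeasure_lborel_cball_max)
  finally show ?thesis by (simp add: emeasure_lborel_cball_max ennreal_minus)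
qed

lemma emeasure_density_power_Ioc:
  fixes n :: nat and v :: real
  assumes "a \<le> b" "0 \<le> v"
  shows "emeasure (density lborel (\<lambda>r. ennreal (n * v * r ^ (n - 1)) * indicator {0<..} r)) {a<..b} =
    ennreal (v * (max b 0) ^ n - v * (max a 0) ^ n)"
proof (cases "b \<le> 0")
  case True
  have "emeasure (density lborel (\<lambda>r. ennreal (n * v * r ^ (n - 1)) * indicator {0<..} r)) {a<..b} =
      (\<integral>\<^sup>+ (x::real). 0 \<partial>lborel)"
  proof (subst emeasure_density)
    show "(\<integral>\<^sup>+x\<in>{a<..b}. ennreal (n * v * x ^ (n - 1)) * indicator {0<..} x \<partial>lborel) =
        (\<integral>\<^sup>+ (x::real). 0 \<partial>lborel)"
      using True by (intro nn_integral_cong) (auto simp: indicator_def)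
  qed auto
  then show ?thesis using True assms by simp
next
  case False
  let ?a = "max a 0"
  have "emeasure (density lborel (\<lambda>r. ennreal (n * v * r ^ (n - 1)) * indicator {0<..} r)) {a<..b} =
      (\<integral>\<^sup>+ x. ennreal (n * v * x ^ (n - 1)) * indicator {?a..b} x \<partial>lborel)"
    by (subst emeasure_density, simp, simp, rule nn_integral_cong_AE)
      (use AE_lborel_singleton[of ?a] in \<open>eventually_elim, auto simp: indicator_def\<close>)
  also have "\<dots> = ennreal (v * b ^ n - v * ?a ^ n)"
    using False assms by (intro nn_integral_FTC_Icc) (auto intro!: derivative_eq_intros)
  finally show ?thesis using False by (simp add: max_absorb1)
qed

lemma distr_norm_lborel:
  "distr (lborel :: 'a::euclidean_space measure) borel norm =
   density lborel (\<lambda>r. ennreal (DIM('a) * unit_ball_vol DIM('a) * r ^ (DIM('a) - 1)) * indicator {0<..} r)"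
  (is "?M = ?N")
proof (rule measure_eqI_generator_eq_countable[where E="range (\<lambda>(a, b). {a <.. b::real})" and \<Omega>=UNIV
     and A="range (\<lambda>m::nat. {-real m<..real m})"])
  show "Int_stable (range (\<lambda>(a, b). {a <.. b::real}))"
    by (auto simp: Int_stable_def intro!: image_eqI[where x="(max _ _, min _ _)"])
  show "range (\<lambda>(a, b). {a <.. b::real}) \<subseteq> Pow UNIV" by auto
  show "sets ?M = sigma_sets UNIV (range (\<lambda>(a, b). {a <.. b::real}))"
  proof -
    have "sets ?M = sets (sigma UNIV (range (\<lambda>(a, b). {a <.. b::real})))"
      by (simp only: sets_distr borel_sigma_sets_Ioc[symmetric])
    then show ?thesis by (simp add: sets_measure_of)
  qed
  then show "sets ?N = sigma_sets UNIV (range (\<lambda>(a, b). {a <.. b::real}))" by simp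
  show "range (\<lambda>m::nat. {-real m<..real m}) \<subseteq> range (\<lambda>(a, b). {a <.. b::real})" by auto
  show "\<Union> (range (\<lambda>m::nat. {-real m<..real m})) = UNIV"
  proof safe
    fix x :: real
    obtain m :: nat where "\<bar>x\<bar> < m" using reals_Archimedean2 by blast
    then show "x \<in> \<Union> (range (\<lambda>m::nat. {-real m<..real m}))" by (intro UN_I[of m]) auto
  qed auto
  show "countable (range (\<lambda>m::nat. {-real m<..real m}))" by simp
  show "emeasure ?M X = emeasure ?N X" if "X \<in> range (\<lambda>(a, b). {a <.. b::real})" for X
    using that emeasure_distr_norm_Ioc[where 'a='a] emeasure_density_power_Ioc[of _ _ "unit_ball_vol DIM('a)"]
    by (cases "X = {}") auto
  show "emeasure ?M X \<noteq> \<infinity>" if "X \<in> range (\<lambda>m::nat. {-real m<..real m})" for X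
    using that emeasure_distr_norm_Ioc[where 'a='a] by auto
qed

lemma nn_integral_radial:
  fixes F :: "real \<Rightarrow> ennreal"
  assumes [measurable]: "F \<in> borel_measurable borel"
  shows "(\<integral>\<^sup>+ x. F (norm x) \<partial>(lebesgue :: 'a::euclidean_space measure)) =
    ennreal (DIM('a) * unit_ball_vol DIM('a)) * (\<integral>\<^sup>+ r\<in>{0<..}. ennreal (r ^ (DIM('a) - 1)) * F r \<partial>lborel)"
proof -
  have "(\<integral>\<^sup>+ x. F (norm x) \<partial>(lebesgue :: 'a measure)) = (\<integral>\<^sup>+ r. F r \<partial>distr lborel borel (norm :: 'a \<Rightarrow> real))"
    by (simp add: nn_integral_completion nn_integral_distr)
  also have "\<dots> = (\<integral>\<^sup>+ r. ennreal (DIM('a) * unit_ball_vol DIM('a)) *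
      (ennreal (r ^ (DIM('a) - 1)) * F r * indicator {0<..} r) \<partial>lborel)"
    unfolding distr_norm_lborel
    by (subst nn_integral_density) (auto intro!: nn_integral_cong simp: ennreal_mult indicator_def mult_ac)
  finally show ?thesis
    by (simp add: nn_integral_cmult)
qed

lemma integrable_radial_iff:
  fixes G :: "real \<Rightarrow> real"
  assumes [measurable]: "G \<in> borel_measurable borel" and nonneg: "\<And>r. 0 \<le> G r"
  shows "integrable (lebesgue :: 'a::euclidean_space measure) (\<lambda>x. G (norm x)) \<longleftrightarrow>
    (\<integral>\<^sup>+ r\<in>{0<..}. ennreal (r ^ (DIM('a) - 1) * G r) \<partial>lborel) < \<infinity>"
proof -
  have "(\<integral>\<^sup>+ r\<in>{0<..}. ennreal (r ^ (DIM('a) - 1)) * ennreal (G r) \<partial>lborel) =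
      (\<integral>\<^sup>+ r\<in>{0<..}. ennreal (r ^ (DIM('a) - 1) * G r) \<partial>lborel)"
    using nonneg by (intro nn_integral_cong) (auto simp: ennreal_mult indicator_def)
  moreover have "(\<lambda>x::'a. G (norm x)) \<in> borel_measurable lebesgue"
    by (rule measurable_completion) simp
  moreover have "ennreal (DIM('a) * unit_ball_vol DIM('a)) \<noteq> 0"
    by (simp add: ennreal_eq_0_iff not_le zero_less_mult_iff)
  ultimately show ?thesis
    using nonneg nn_integral_radial[of "\<lambda>r. ennreal (G r)", where 'a='a]
    by (auto simp: integrable_iff_bounded ennreal_mult_less_top top.not_eq_extremum)
qed

section \<open>The multiplication operator\<close>

definition resolvent_delta :: "(real \<Rightarrow> real) \<Rightarrow> real^'n \<Rightarrow> real" where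
  "resolvent_delta \<phi> k = 1 / (1 + \<phi> (norm k))"

locale radial_mult =
  fixes \<phi> :: "real \<Rightarrow> real"
  assumes continuous: "continuous_on {0..} \<phi>" and nonneg: "\<And>r. 0 \<le> r \<Longrightarrow> 0 \<le> \<phi> r"
begin

lemma phi_norm_nonneg: "0 \<le> \<phi> (norm k)"
  by (simp add: nonneg)

lemma continuous_on_phi_norm: "continuous_on UNIV (\<lambda>k::'a::real_normed_vector. \<phi> (norm k))"
  by (rule continuous_on_compose2[OF continuous continuous_on_norm_id]) auto

lemma borel_measurable_phi_norm [measurable]:
  "(\<lambda>k::'a::euclidean_space. \<phi> (norm k)) \<in> borel_measurable lebesgue"
  by (rule measurable_completion) (simp add: borel_measurable_continuous_onI continuous_on_phi_norm)

lemma bounded_phi_norm: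
  assumes "bounded (S :: 'a::real_normed_vector set)"
  obtains M where "\<And>k. k \<in> S \<Longrightarrow> \<phi> (norm k) \<le> M"
proof -
  obtain R where R: "\<And>k. k \<in> S \<Longrightarrow> norm k \<le> R"
    using assms by (auto simp: bounded_iff)
  have "bounded (\<phi> ` {0..R})"
    by (intro compact_imp_bounded compact_continuous_image continuous_on_subset[OF continuous]) auto
  then obtain M where M: "\<forall>r\<in>{0..R}. norm (\<phi> r) \<le> M"
    by (auto simp: bounded_iff)
  show thesis
  proof (rule that)
    fix k assume "k \<in> S"
    then have "norm k \<in> {0..R}" using R by simp
    then show "\<phi> (norm k) \<le> M" using M by fastforce
  qed
qed

lemma cmod_one_plus_phi_norm [simp]: "cmod (1 + complex_of_real (\<phi> (norm k))) = 1 + \<phi> (norm k)"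
  using phi_norm_nonneg[of k] by (metis abs_of_nonneg add_nonneg_nonneg norm_of_real of_real_1 of_real_add zero_le_one)

lemma borel_measurable_resolvent_delta [measurable]:
  "resolvent_delta \<phi> \<in> borel_measurable lebesgue"
  unfolding resolvent_delta_def[abs_def] by measurable

lemma resolvent_delta_pos: "0 < resolvent_delta \<phi> k"
  and resolvent_delta_le_1: "resolvent_delta \<phi> k \<le> 1"
  using phi_norm_nonneg[of k] by (simp_all add: resolvent_delta_def)

lemma one_plus_phi_mult_resolvent_delta_real: "(1 + \<phi> (norm k)) * resolvent_delta \<phi> k = 1"
  using phi_norm_nonneg[of k] by (simp add: resolvent_delta_def)

lemma one_plus_phi_mult_resolvent_delta:
  "(1 + complex_of_real (\<phi> (norm k))) * complex_of_real (resolvent_delta \<phi> k) = 1"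
  using one_plus_phi_mult_resolvent_delta_real[of k] by (metis of_real_1 of_real_add of_real_mult)

lemma mult_dom_iff:
  "f \<in> mult_dom \<phi> \<longleftrightarrow> f \<in> L2 \<and> (\<lambda>k. of_real (1 + \<phi> (norm k)) * f k) \<in> L2"
proof -
  have "f \<in> borel_measurable lebesgue \<Longrightarrow>
      (\<lambda>k. of_real (1 + \<phi> (norm k)) * f k) \<in> borel_measurable lebesgue"
    by measurable
  then show ?thesis
    unfolding mult_dom_def L2_def by (auto simp: norm_mult power_mult_distrib)
qed

lemma mult_dom_imp_L2: "f \<in> mult_dom \<phi> \<Longrightarrow> f \<in> L2"
  and mult_dom_imp_L2_one_plus_phi: "f \<in> mult_dom \<phi> \<Longrightarrow> (\<lambda>k. of_real (1 + \<phi> (norm k)) * f k) \<in> L2"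
  by (simp_all add: mult_dom_iff)

lemma mult_dom_imp_L2_phi:
  fixes f :: "real^'n \<Rightarrow> complex"
  assumes f: "f \<in> mult_dom \<phi>"
  shows "(\<lambda>k. of_real (\<phi> (norm k)) * f k) \<in> L2"
proof (rule L2_dominated[OF mult_dom_imp_L2_one_plus_phi[OF f], of _ 1])
  have [measurable]: "f \<in> borel_measurable lebesgue"
    using f by (simp add: mult_dom_iff L2_borel_measurable)
  show "(\<lambda>k. of_real (\<phi> (norm k)) * f k) \<in> borel_measurable lebesgue" by measurable
  show "AE k in lebesgue. cmod (of_real (\<phi> (norm k)) * f k) \<le> 1 * cmod (of_real (1 + \<phi> (norm k)) * f k)"
  proof (intro AE_I2)
    fix k :: "real^'n"
    have "\<bar>\<phi> (norm k)\<bar> \<le> 1 + \<phi> (norm k)" using phi_norm_nonneg[of k] by simp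
    then show "cmod (of_real (\<phi> (norm k)) * f k) \<le> 1 * cmod (of_real (1 + \<phi> (norm k)) * f k)"
      by (simp add: norm_mult mult_right_mono)
  qed
qed

lemma mult_dom_add: "f \<in> mult_dom \<phi> \<Longrightarrow> g \<in> mult_dom \<phi> \<Longrightarrow> (\<lambda>k. f k + g k) \<in> mult_dom \<phi>"
  using L2_add[of "\<lambda>k. of_real (1 + \<phi> (norm k)) * f k" "\<lambda>k. of_real (1 + \<phi> (norm k)) * g k"]
  by (simp add: mult_dom_iff L2_add distrib_left)

lemma mult_dom_mult_left: "f \<in> mult_dom \<phi> \<Longrightarrow> (\<lambda>k. c * f k) \<in> mult_dom \<phi>"
  using L2_mult_left[of "\<lambda>k. of_real (1 + \<phi> (norm k)) * f k" c]
  by (simp add: mult_dom_iff L2_mult_left mult.left_commute)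

lemma mult_dom_diff: "f \<in> mult_dom \<phi> \<Longrightarrow> g \<in> mult_dom \<phi> \<Longrightarrow> (\<lambda>k. f k - g k) \<in> mult_dom \<phi>"
  using mult_dom_add[of f "\<lambda>k. -1 * g k"] mult_dom_mult_left[of g "-1"] by simp

lemma mult_dom_bounded_support:
  fixes f :: "real^'n \<Rightarrow> complex"
  assumes f: "f \<in> borel_measurable lebesgue" and S: "S \<in> sets lebesgue" "bounded S"
    and bound: "\<And>k. cmod (f k) \<le> C * indicator S k"
  shows "f \<in> mult_dom \<phi>"
proof -
  have S_fin: "S \<in> lmeasurable"
    using S by (intro bounded_set_imp_lmeasurable)
  obtain M where M: "\<And>k. k \<in> S \<Longrightarrow> \<phi> (norm k) \<le> M"
    using bounded_phi_norm[OF S(2)] by blast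
  have "(\<lambda>k. of_real (1 + \<phi> (norm k)) * f k) \<in> L2"
  proof (rule L2_bounded_support[OF _ S_fin])
    show "(\<lambda>k. of_real (1 + \<phi> (norm k)) * f k) \<in> borel_measurable lebesgue"
      using f by measurable
    fix k
    show "cmod (of_real (1 + \<phi> (norm k)) * f k) \<le> ((1 + M) * C) * indicator S k"
    proof (cases "k \<in> S")
      case True
      then have "(1 + \<phi> (norm k)) * cmod (f k) \<le> (1 + M) * C"
        using bound[of k] M[of k] phi_norm_nonneg[of k] by (intro mult_mono) auto
      then show ?thesis using True phi_norm_nonneg[of k] by (simp add: norm_mult)
    qed (use bound[of k] in simp)
  qed
  then show ?thesis
    using L2_bounded_support[OF f S_fin bound] by (simp add: mult_dom_iff)
qed

lemma mult_dom_indicator: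
  "S \<in> sets lebesgue \<Longrightarrow> bounded S \<Longrightarrow> (\<lambda>k. complex_of_real (indicator S k)) \<in> mult_dom \<phi>"
  by (rule mult_dom_bounded_support[of _ S 1]) auto

lemma mult_dom_div_phi_indicator:
  fixes G :: "real^'n \<Rightarrow> real"
  assumes S: "S \<in> sets lebesgue" "bounded S" "0 < \<delta>" "\<And>k. k \<in> S \<Longrightarrow> \<delta> \<le> \<phi> (norm k)"
    and G: "G \<in> borel_measurable lebesgue" "\<And>k. \<bar>G k\<bar> \<le> 1"
  shows "(\<lambda>k. complex_of_real (G k / \<phi> (norm k) * indicator S k)) \<in> mult_dom \<phi>"
proof (rule mult_dom_bounded_support[OF _ S(1,2), of _ "1 / \<delta>"])
  show "(\<lambda>k. complex_of_real (G k / \<phi> (norm k) * indicator S k)) \<in> borel_measurable lebesgue"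
    using S G by measurable
  show "cmod (complex_of_real (G k / \<phi> (norm k) * indicator S k)) \<le> 1 / \<delta> * indicator S k" for k
  proof (cases "k \<in> S")
    case True
    then have "0 < \<phi> (norm k)"
      using S(3) S(4)[of k] by linarith
    moreover have "\<bar>G k\<bar> / \<phi> (norm k) \<le> 1 / \<delta>"
      using True S(3) S(4)[of k] G(2)[of k] by (intro frac_le) auto
    ultimately show ?thesis
      using True by (simp add: abs_divide del: of_real_divide)
  qed simp
qed

lemma mult_dom_integral_surj:
  "\<exists>q :: real^'n \<Rightarrow> complex. q \<in> mult_dom \<phi> \<and> integral\<^sup>L lebesgue q = z"
proof -
  define B where "B = cball (0::real^'n) 1"
  have B: "B \<in> sets lebesgue" "bounded B" "emeasure lebesgue B < \<infinity>"
    using lmeasurable_cball by (auto simp: B_def fmeasurable_def)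
  have pos: "0 < measure lebesgue B"
    using content_cball_pos[of 1 "0::real^'n"] by (simp add: B_def measure_completion)
  have "integral\<^sup>L lebesgue (\<lambda>k. complex_of_real (indicator B k)) = of_real (measure lebesgue B)"
    using B by simp
  then have "integral\<^sup>L lebesgue (\<lambda>k. z / of_real (measure lebesgue B) * of_real (indicator B k)) = z"
    using pos by simp
  then show ?thesis
    using mult_dom_mult_left[OF mult_dom_indicator[OF B(1,2)]] by blast
qed

lemma mult_dom_of_adjoint:
  fixes g h :: "real^'n \<Rightarrow> complex"
  assumes g: "g \<in> L2" and h: "h \<in> L2"
    and eq: "AE k in lebesgue. h k = of_real (\<phi> (norm k)) * g k + \<kappa>"
  shows "(\<lambda>k. g k + \<kappa> * of_real (resolvent_delta \<phi> k)) \<in> mult_dom \<phi>"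
proof -
  let ?g0 = "\<lambda>k. g k + \<kappa> * of_real (resolvent_delta \<phi> k)"
  have [measurable]: "g \<in> borel_measurable lebesgue" "h \<in> borel_measurable lebesgue"
    using g h by (auto dest: L2_borel_measurable)
  have "AE k in lebesgue. g k + h k = of_real (1 + \<phi> (norm k)) * ?g0 k"
    using eq
  proof eventually_elim
    case (elim k)
    have "of_real (1 + \<phi> (norm k)) * ?g0 k =
        (1 + of_real (\<phi> (norm k))) * g k + \<kappa> * ((1 + of_real (\<phi> (norm k))) * of_real (resolvent_delta \<phi> k))"
      by (simp add: algebra_simps)
    then show ?case
      using elim by (simp only: one_plus_phi_mult_resolvent_delta) (simp add: algebra_simps)
  qed
  then have L2_one_plus_phi: "(\<lambda>k. of_real (1 + \<phi> (norm k)) * ?g0 k) \<in> L2"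
    by (intro L2_cong_AE[OF L2_add[OF g h]]) measurable
  have "?g0 \<in> L2"
  proof (rule L2_dominated[OF L2_one_plus_phi, of _ 1])
    show "?g0 \<in> borel_measurable lebesgue" by measurable
    show "AE k in lebesgue. cmod (?g0 k) \<le> 1 * cmod (of_real (1 + \<phi> (norm k)) * ?g0 k)"
    proof (intro AE_I2)
      fix k :: "real^'n"
      have "1 \<le> 1 + \<phi> (norm k)" using phi_norm_nonneg[of k] by simp
      from mult_right_mono[OF this norm_ge_zero[of "?g0 k"]]
      show "cmod (?g0 k) \<le> 1 * cmod (of_real (1 + \<phi> (norm k)) * ?g0 k)"
        by (simp add: norm_mult)
    qed
  qed
  with L2_one_plus_phi show ?thesis
    by (simp add: mult_dom_iff)
qed

lemma resolvent_delta_notin_mult_dom: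
  fixes p :: "real^'n \<Rightarrow> complex"
  assumes p: "p \<in> mult_dom \<phi>" and ae: "AE k in lebesgue. p k = c * of_real (resolvent_delta \<phi> k)"
  shows "c = 0"
proof -
  have "AE k in lebesgue. of_real (1 + \<phi> (norm k)) * p k = c"
    using ae
  proof eventually_elim
    case (elim k)
    then have "of_real (1 + \<phi> (norm k)) * p k =
        c * ((1 + of_real (\<phi> (norm k))) * of_real (resolvent_delta \<phi> k))"
      by (simp add: ac_simps)
    then show ?case by (simp only: one_plus_phi_mult_resolvent_delta mult_1_right)
  qed
  then have "(\<lambda>_::real^'n. c) \<in> L2"
    by (intro L2_cong_AE[OF mult_dom_imp_L2_one_plus_phi[OF p]]) simp_all
  then have "integrable (lebesgue :: (real^'n) measure) (\<lambda>_. (cmod c)\<^sup>2)"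
    by (rule L2_integrable_square)
  then show "c = 0"
    by (simp add: integrable_const_lebesgue_iff)
qed

lemma mult_opI: "f \<in> mult_dom \<phi> \<Longrightarrow> (f, \<lambda>k. of_real (\<phi> (norm k)) * f k) \<in> mult_op \<phi>"
  unfolding mult_op_def using mult_dom_imp_L2_phi by simp

lemma mult_opD:
  assumes "(f, u) \<in> mult_op \<phi>"
  shows "f \<in> mult_dom \<phi>" "u \<in> L2" "AE k in lebesgue. u k = of_real (\<phi> (norm k)) * f k"
  using assms unfolding mult_op_def by auto

lemma mult_op0I:
  "f \<in> mult_dom \<phi> \<Longrightarrow> integral\<^sup>L lebesgue f = 0 \<Longrightarrow> (f, \<lambda>k. of_real (\<phi> (norm k)) * f k) \<in> mult_op0 \<phi>"
  unfolding mult_op0_def using mult_opI by simp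

lemma mult_op0_subset_mult_op: "mult_op0 \<phi> \<subseteq> mult_op \<phi>"
  unfolding mult_op0_def by auto

lemma integral_scaleR_residual:
  fixes g h :: "real^'n \<Rightarrow> complex"
  assumes g: "g \<in> L2" and h: "h \<in> L2" and F: "(\<lambda>k. complex_of_real (F k)) \<in> mult_dom \<phi>"
  shows "integrable lebesgue (\<lambda>k. F k *\<^sub>R (h k - of_real (\<phi> (norm k)) * g k))"
    and "(LINT k|lebesgue. F k *\<^sub>R (h k - of_real (\<phi> (norm k)) * g k)) =
      L2_inner (\<lambda>k. of_real (F k)) h - L2_inner (\<lambda>k. of_real (\<phi> (norm k)) * of_real (F k)) g"
proof -
  have "(\<lambda>k. F k *\<^sub>R (h k - of_real (\<phi> (norm k)) * g k)) =
      (\<lambda>k. cnj (of_real (F k)) * h k - cnj (of_real (\<phi> (norm k)) * of_real (F k)) * g k)"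
    by (simp add: fun_eq_iff scaleR_conv_of_real algebra_simps)
  moreover have "integrable lebesgue (\<lambda>k. cnj (of_real (F k)) * h k)"
    by (rule integrable_cnj_mult_L2[OF mult_dom_imp_L2[OF F] h])
  moreover have "integrable lebesgue (\<lambda>k. cnj (of_real (\<phi> (norm k)) * of_real (F k)) * g k)"
    by (rule integrable_cnj_mult_L2[OF mult_dom_imp_L2_phi[OF F] g])
  ultimately show "integrable lebesgue (\<lambda>k. F k *\<^sub>R (h k - of_real (\<phi> (norm k)) * g k))"
    and "(LINT k|lebesgue. F k *\<^sub>R (h k - of_real (\<phi> (norm k)) * g k)) =
      L2_inner (\<lambda>k. of_real (F k)) h - L2_inner (\<lambda>k. of_real (\<phi> (norm k)) * of_real (F k)) g"
    unfolding L2_inner_def by simp_all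
qed

lemma is_operator_mult_op: "is_operator (mult_op \<phi> :: ((real^'n \<Rightarrow> complex) \<times> _) set)"
proof -
  have "mult_op \<phi> \<subseteq> (L2 :: (real^'n \<Rightarrow> complex) set) \<times> L2"
    using mult_opD mult_dom_imp_L2 by fast
  moreover have "AE k in lebesgue. u k = v k"
    if "(f, u) \<in> mult_op \<phi>" "(g, v) \<in> mult_op \<phi>" "AE k in lebesgue. f k = g k"
    for f u g v :: "real^'n \<Rightarrow> complex"
    using mult_opD(3)[OF that(1)] mult_opD(3)[OF that(2)] that(3) by eventually_elim simp
  ultimately show ?thesis
    unfolding is_operator_def by blast
qed

lemma mult_op_subset_adjoint: "mult_op \<phi> \<subseteq> adjoint_op (mult_op \<phi> :: ((real^'n \<Rightarrow> complex) \<times> _) set)"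
proof safe
  fix g h :: "real^'n \<Rightarrow> complex"
  assume "(g, h) \<in> mult_op \<phi>"
  note g = mult_opD[OF this]
  show "(g, h) \<in> adjoint_op (mult_op \<phi>)"
    unfolding adjoint_op_def
  proof (safe intro!: g(2) mult_dom_imp_L2[OF g(1)])
    fix f u :: "real^'n \<Rightarrow> complex"
    assume "(f, u) \<in> mult_op \<phi>"
    note f = mult_opD[OF this]
    have "L2_inner u g = L2_inner (\<lambda>k. of_real (\<phi> (norm k)) * f k) g"
      using f g by (intro L2_inner_cong_AE) (auto intro: mult_dom_imp_L2 mult_dom_imp_L2_phi)
    also have "\<dots> = L2_inner f (\<lambda>k. of_real (\<phi> (norm k)) * g k)"
      unfolding L2_inner_def by (simp add: mult_ac)
    also have "\<dots> = L2_inner f h"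
      using f g by (intro L2_inner_cong_AE) (auto intro: mult_dom_imp_L2 mult_dom_imp_L2_phi elim: eventually_mono)
    finally show "L2_inner u g = L2_inner f h" .
  qed
qed

lemma adjoint_mult_op_subset: "adjoint_op (mult_op \<phi>) \<subseteq> (mult_op \<phi> :: ((real^'n \<Rightarrow> complex) \<times> _) set)"
proof safe
  fix g h :: "real^'n \<Rightarrow> complex"
  assume gh: "(g, h) \<in> adjoint_op (mult_op \<phi>)"
  note g = adjoint_opD(1)[OF gh] and h = adjoint_opD(2)[OF gh]
  have [measurable]: "g \<in> borel_measurable lebesgue" "h \<in> borel_measurable lebesgue"
    using g h by (auto dest: L2_borel_measurable)
  have "AE k in lebesgue. h k - of_real (\<phi> (norm k)) * g k = 0"
  proof (rule AE_eq_0_if_bounded_set_integrals_eq_0)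
    fix S :: "(real^'n) set"
    assume "S \<in> sets lebesgue" "bounded S"
    note indicator = mult_dom_indicator[OF this]
    have "L2_inner (\<lambda>k. of_real (\<phi> (norm k)) * of_real (indicator S k)) g =
        L2_inner (\<lambda>k. of_real (indicator S k)) h"
      by (rule adjoint_opD(3)[OF gh mult_opI[OF indicator]])
    then show "set_integrable lebesgue S (\<lambda>k. h k - of_real (\<phi> (norm k)) * g k) \<and>
        (LINT k:S|lebesgue. h k - of_real (\<phi> (norm k)) * g k) = 0"
      using integral_scaleR_residual[OF g h indicator]
      unfolding set_integrable_def set_lebesgue_integral_def by simp
  qed measurable
  then have eq: "AE k in lebesgue. h k = of_real (\<phi> (norm k)) * g k + 0"
    by simp
  show "(g, h) \<in> mult_op \<phi>"
    using mult_dom_of_adjoint[OF g h eq] h eq unfolding mult_op_def by simp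
qed

lemma self_adjoint_mult_op: "self_adjoint_op (mult_op \<phi> :: ((real^'n \<Rightarrow> complex) \<times> _) set)"
  unfolding self_adjoint_op_def
  using is_operator_mult_op mult_op_subset_adjoint adjoint_mult_op_subset by blast

lemma nonneg_mult_op: "nonneg_op (mult_op \<phi> :: ((real^'n \<Rightarrow> complex) \<times> _) set)"
  unfolding nonneg_op_def
proof safe
  fix f u :: "real^'n \<Rightarrow> complex"
  assume "(f, u) \<in> mult_op \<phi>"
  note f = mult_opD[OF this]
  have integrable: "integrable lebesgue (\<lambda>k. cnj (f k) * (of_real (\<phi> (norm k)) * f k))"
    using f(1) by (intro integrable_cnj_mult_L2 mult_dom_imp_L2 mult_dom_imp_L2_phi)
  have "L2_inner f u = L2_inner f (\<lambda>k. of_real (\<phi> (norm k)) * f k)"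
    using f by (intro L2_inner_cong_AE) (auto intro: mult_dom_imp_L2 mult_dom_imp_L2_phi)
  then have "Re (L2_inner f u) = (LINT k|lebesgue. Re (cnj (f k) * (of_real (\<phi> (norm k)) * f k)))"
    unfolding L2_inner_def by (simp only: integral_Re[OF integrable])
  also have "\<dots> = (LINT k|lebesgue. \<phi> (norm k) * (cmod (f k))\<^sup>2)"
    by (simp only: Re_cnj_mult_of_real_mult)
  also have "\<dots> \<ge> 0"
    by (intro integral_nonneg_AE AE_I2) (simp add: phi_norm_nonneg)
  finally show "0 \<le> Re (L2_inner f u)" .
qed

lemma adjoint_mult_op0_set_integrals:
  fixes g h :: "real^'n \<Rightarrow> complex"
  assumes gh: "(g, h) \<in> adjoint_op (mult_op0 \<phi>)"
    and S: "S \<in> sets lebesgue" "bounded S" and B: "B \<in> sets lebesgue" "bounded B"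
  shows "measure lebesgue B *\<^sub>R (LINT k:S|lebesgue. h k - of_real (\<phi> (norm k)) * g k) =
    measure lebesgue S *\<^sub>R (LINT k:B|lebesgue. h k - of_real (\<phi> (norm k)) * g k)"
proof -
  note g = adjoint_opD(1)[OF gh] and h = adjoint_opD(2)[OF gh]
  define F where "F k = measure lebesgue B * indicator S k - measure lebesgue S * indicator B k" for k
  have "(\<lambda>k. of_real (measure lebesgue B) * of_real (indicator S k)
      - of_real (measure lebesgue S) * of_real (indicator B k)) \<in> mult_dom \<phi>"
    by (intro mult_dom_diff mult_dom_mult_left mult_dom_indicator S B)
  then have F_dom: "(\<lambda>k. complex_of_real (F k)) \<in> mult_dom \<phi>"
    unfolding F_def by simp
  have "S \<in> lmeasurable" "B \<in> lmeasurable"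
    using S B by (auto intro: bounded_set_imp_lmeasurable)
  then have "integral\<^sup>L lebesgue F = 0"
    unfolding F_def fmeasurable_def by (auto simp: Bochner_Integration.integral_diff)
  then have "(\<lambda>k. of_real (F k), \<lambda>k. of_real (\<phi> (norm k)) * of_real (F k)) \<in> mult_op0 \<phi>"
    by (intro mult_op0I F_dom) simp
  then have "(LINT k|lebesgue. F k *\<^sub>R (h k - of_real (\<phi> (norm k)) * g k)) = 0"
    using integral_scaleR_residual(2)[OF g h F_dom] adjoint_opD(3)[OF gh] by simp
  moreover have "(LINT k|lebesgue. F k *\<^sub>R (h k - of_real (\<phi> (norm k)) * g k)) =
      measure lebesgue B *\<^sub>R (LINT k:S|lebesgue. h k - of_real (\<phi> (norm k)) * g k)
      - measure lebesgue S *\<^sub>R (LINT k:B|lebesgue. h k - of_real (\<phi> (norm k)) * g k)"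
    using integral_scaleR_residual(1)[OF g h mult_dom_indicator[OF S]]
      integral_scaleR_residual(1)[OF g h mult_dom_indicator[OF B]]
    unfolding set_lebesgue_integral_def F_def scaleR_diff_left scaleR_scaleR[symmetric]
    by (simp only: Bochner_Integration.integral_diff integrable_scaleR_right integral_scaleR_right)
  ultimately show ?thesis
    by simp
qed

lemma adjoint_mult_op0_ae_eq:
  fixes g h :: "real^'n \<Rightarrow> complex"
  assumes gh: "(g, h) \<in> adjoint_op (mult_op0 \<phi>)"
  obtains \<kappa> where "AE k in lebesgue. h k = of_real (\<phi> (norm k)) * g k + \<kappa>"
proof -
  note g = adjoint_opD(1)[OF gh] and h = adjoint_opD(2)[OF gh]
  define w where "w k = h k - of_real (\<phi> (norm k)) * g k" for k
  have [measurable]: "w \<in> borel_measurable lebesgue"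
    using g h unfolding w_def by (auto dest!: L2_borel_measurable)
  define B where "B = cball (0::real^'n) 1"
  have B: "B \<in> sets lebesgue" "bounded B"
    by (simp_all add: B_def)
  have B_pos: "0 < measure lebesgue B"
    using content_cball_pos[of 1 "0::real^'n"] by (simp add: B_def measure_completion)
  define \<kappa> where "\<kappa> = (LINT k:B|lebesgue. w k) /\<^sub>R measure lebesgue B"
  have "AE k in lebesgue. w k = \<kappa>"
  proof (rule AE_eq_const_if_set_integrals)
    fix S :: "(real^'n) set"
    assume S: "S \<in> sets lebesgue" "bounded S"
    have "(LINT k:S|lebesgue. w k) =
        inverse (measure lebesgue B) *\<^sub>R (measure lebesgue B *\<^sub>R (LINT k:S|lebesgue. w k))"
      using B_pos by simp
    also have "\<dots> = measure lebesgue S *\<^sub>R \<kappa>"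
      using adjoint_mult_op0_set_integrals[OF gh S B] unfolding w_def[symmetric] \<kappa>_def
      by (simp add: mult.commute)
    finally show "set_integrable lebesgue S w \<and> (LINT k:S|lebesgue. w k) = measure lebesgue S *\<^sub>R \<kappa>"
      using integral_scaleR_residual(1)[OF g h mult_dom_indicator[OF S]]
      unfolding set_integrable_def w_def by simp
  qed measurable
  then show thesis
    by (intro that[of \<kappa>]) (auto simp: w_def elim: eventually_mono)
qed

lemma adjoint_mult_op0_decompose:
  fixes g h :: "real^'n \<Rightarrow> complex"
  assumes gh: "(g, h) \<in> adjoint_op (mult_op0 \<phi>)"
  obtains g0 c where "g0 \<in> mult_dom \<phi>" "\<And>k. g k = g0 k + c * of_real (resolvent_delta \<phi> k)"
    "AE k in lebesgue. h k = of_real (\<phi> (norm k)) * g0 k - c * of_real (resolvent_delta \<phi> k)"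
proof -
  obtain \<kappa> where \<kappa>: "AE k in lebesgue. h k = of_real (\<phi> (norm k)) * g k + \<kappa>"
    using adjoint_mult_op0_ae_eq[OF gh] by blast
  let ?g0 = "\<lambda>k. g k + \<kappa> * of_real (resolvent_delta \<phi> k)"
  have "AE k in lebesgue. h k = of_real (\<phi> (norm k)) * ?g0 k - (- \<kappa>) * of_real (resolvent_delta \<phi> k)"
    using \<kappa>
  proof eventually_elim
    case (elim k)
    have "of_real (\<phi> (norm k)) * ?g0 k - (- \<kappa>) * of_real (resolvent_delta \<phi> k) =
        of_real (\<phi> (norm k)) * g k + \<kappa> * ((1 + of_real (\<phi> (norm k))) * of_real (resolvent_delta \<phi> k))"
      by (simp add: algebra_simps)
    then show ?case
      using elim by (simp add: one_plus_phi_mult_resolvent_delta)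
  qed
  then show thesis
    using mult_dom_of_adjoint[OF adjoint_opD(1,2)[OF gh] \<kappa>] by (intro that[of ?g0 "- \<kappa>"]) simp_all
qed

lemma integrable_radial_phi_iff:
  fixes X :: "real \<Rightarrow> real"
  assumes [measurable]: "X \<in> borel_measurable borel" and X_nonneg: "\<And>x. 0 \<le> x \<Longrightarrow> 0 \<le> X x"
  shows "integrable lebesgue (\<lambda>k::real^'n. 1 / X (\<phi> (norm k))) \<longleftrightarrow>
    (\<integral>\<^sup>+ r\<in>{0<..}. ennreal (r ^ (CARD('n) - 1) / X (\<phi> r)) \<partial>lborel) < \<infinity>"
proof -
  \<comment> \<open>\<open>\<phi>\<close> is only known on \<open>[0, \<infinity>)\<close>, so extend it constantly to the left before integrating\<close>
  define G where "G r = 1 / X (\<phi> (max r 0))" for r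
  have "continuous_on UNIV (\<lambda>r. \<phi> (max r 0))"
    by (rule continuous_on_compose2[OF continuous]) (auto intro!: continuous_intros)
  then have "(\<lambda>r. \<phi> (max r 0)) \<in> borel_measurable borel"
    by (rule borel_measurable_continuous_onI)
  then have "G \<in> borel_measurable borel"
    unfolding G_def by measurable
  moreover have "0 \<le> G r" for r
    using X_nonneg[OF nonneg[of "max r 0"]] by (simp add: G_def)
  ultimately have "integrable lebesgue (\<lambda>k::real^'n. G (norm k)) \<longleftrightarrow>
      (\<integral>\<^sup>+ r\<in>{0<..}. ennreal (r ^ (DIM(real^'n) - 1) * G r) \<partial>lborel) < \<infinity>"
    by (rule integrable_radial_iff)
  moreover have "(\<integral>\<^sup>+ r\<in>{0<..}. ennreal (r ^ (DIM(real^'n) - 1) * G r) \<partial>lborel) =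
      (\<integral>\<^sup>+ r\<in>{0<..}. ennreal (r ^ (CARD('n) - 1) / X (\<phi> r)) \<partial>lborel)"
    by (intro nn_integral_cong) (simp add: G_def indicator_def)
  ultimately show ?thesis
    by (simp add: G_def)
qed

lemma square_integrable_resolvent_delta_iff:
  "integrable lebesgue (\<lambda>k::real^'n. (resolvent_delta \<phi> k)\<^sup>2) \<longleftrightarrow>
    (\<integral>\<^sup>+ r\<in>{0<..}. ennreal (r ^ (CARD('n) - 1) / (1 + \<phi> r)\<^sup>2) \<partial>lborel) < \<infinity>"
  using integrable_radial_phi_iff[where 'n='n, of "\<lambda>x. (1 + x)\<^sup>2"]
  by (simp add: resolvent_delta_def power_divide)

lemma integrable_resolvent_delta_iff:
  "integrable lebesgue (resolvent_delta \<phi> :: real^'n \<Rightarrow> real) \<longleftrightarrow>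
    (\<integral>\<^sup>+ r\<in>{0<..}. ennreal (r ^ (CARD('n) - 1) / (1 + \<phi> r)) \<partial>lborel) < \<infinity>"
  using integrable_radial_phi_iff[where 'n='n, of "\<lambda>x. 1 + x"]
  by (simp add: resolvent_delta_def[abs_def])

lemma integrable_resolvent_delta_div_iff:
  "integrable lebesgue (\<lambda>k::real^'n. resolvent_delta \<phi> k / \<phi> (norm k)) \<longleftrightarrow>
    (\<integral>\<^sup>+ r\<in>{0<..}. ennreal (r ^ (CARD('n) - 1) / (\<phi> r * (1 + \<phi> r))) \<partial>lborel) < \<infinity>"
  using integrable_radial_phi_iff[where 'n='n, of "\<lambda>x. x * (1 + x)"]
  by (simp add: resolvent_delta_def mult.commute)

end

text \<open>Bounds on the density \<open>Re (cnj (z + E) (P z - E))\<close> of the quadratic form of the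
  singular perturbations, with \<open>P = \<phi>(|k|)\<close> and \<open>E = e(k)\<close>.\<close>

lemma Re_energy_density_ge_neg:
  fixes P E :: real and z :: complex
  assumes PE: "(1 + P) * E = 1" and P: "0 \<le> P"
  shows "- Re z - E \<le> Re (cnj (z + of_real E) * (of_real P * z - of_real E))"
proof -
  have "Re (cnj (z + of_real E) * (of_real P * z - of_real E)) + Re z + E =
      P * ((Re z + E)\<^sup>2 + (Im z)\<^sup>2) + (Re z + E) * (1 - (1 + P) * E)"
    by (simp add: algebra_simps power2_eq_square)
  also have "\<dots> \<ge> 0"
    using PE P by simp
  finally show ?thesis by simp
qed

lemma Re_energy_density_ge_pos:
  fixes P E :: real and z :: complex
  assumes PE: "(1 + P) * E = 1" and P: "0 < P"
  shows "Re z - E / P \<le> Re (cnj (z + of_real E) * (of_real P * z - of_real E))"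
proof -
  have "P * (Re (cnj (z + of_real E) * (of_real P * z - of_real E)) - Re z + E / P) =
      (P * Re z - E)\<^sup>2 + P\<^sup>2 * (Im z)\<^sup>2 + (P * Re z - E) * ((1 + P) * E - 1)"
    using P by (simp add: algebra_simps power2_eq_square)
  also have "\<dots> \<ge> 0"
    using PE by simp
  finally show ?thesis
    using P by (simp add: zero_le_mult_iff)
qed

lemma Re_energy_density_le:
  fixes P E :: real and \<mu> :: complex
  assumes PE: "(1 + P) * E = 1" and P: "3 \<le> P" and \<mu>: "Re \<mu> \<le> 0"
  shows "Re (cnj (\<mu> / of_real P + of_real E) * (of_real P * (\<mu> / of_real P) - of_real E))
    \<le> ((cmod \<mu>)\<^sup>2 + Re \<mu> / 2) / P"
proof -
  have P_pos: "0 < P" using P by simp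
  have E_eq: "E = 1 / (1 + P)"
    using PE P_pos by (simp add: field_simps)
  have E: "0 < E" "E \<le> 1/4"
    unfolding E_eq using P by (simp_all add: field_simps)
  have "P * Re (cnj (\<mu> / of_real P + of_real E) * (of_real P * (\<mu> / of_real P) - of_real E)) =
      (Re \<mu>)\<^sup>2 + (Im \<mu>)\<^sup>2 + Re \<mu> * (P * E - E) - P * E * E"
    using P_pos by (simp add: Re_divide Im_divide field_simps power2_eq_square)
  also have "\<dots> = (cmod \<mu>)\<^sup>2 + Re \<mu> / 2 + Re \<mu> * (1/2 - 2 * E) - (1 - E) * E"
    unfolding cmod_power2 using PE by algebra
  also have "\<dots> \<le> (cmod \<mu>)\<^sup>2 + Re \<mu> / 2"
  proof -
    have "Re \<mu> * (1/2 - 2 * E) \<le> 0"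
      using \<mu> E by (intro mult_nonpos_nonneg) auto
    moreover have "0 \<le> (1 - E) * E"
      using E by simp
    ultimately show ?thesis by linarith
  qed
  finally show ?thesis
    using P_pos by (simp add: field_simps)
qed

section \<open>Singular perturbations\<close>

definition singular_ext :: "(real \<Rightarrow> real) \<Rightarrow> real \<Rightarrow> ((real^'n \<Rightarrow> complex) \<times> (real^'n \<Rightarrow> complex)) set" where
  "singular_ext \<phi> \<theta> = {(g, h). g \<in> L2 \<and> h \<in> L2 \<and>
    (\<exists>g0 c. g0 \<in> mult_dom \<phi> \<and> integral\<^sup>L lebesgue g0 = of_real \<theta> * c \<and>
     (AE k in lebesgue. g k = g0 k + c * of_real (resolvent_delta \<phi> k)) \<and>
     (AE k in lebesgue. h k = of_real (\<phi> (norm k)) * g0 k - c * of_real (resolvent_delta \<phi> k)))}"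

text \<open>For \<open>\<integral> p = \<theta>\<close>, the real part of \<open>ext_energy \<phi> p\<close> is the quadratic form of
  \<open>singular_ext \<phi> \<theta>\<close> at \<open>p + e\<close>.\<close>

definition ext_energy :: "(real \<Rightarrow> real) \<Rightarrow> (real^'n \<Rightarrow> complex) \<Rightarrow> complex" where
  "ext_energy \<phi> p = L2_inner (\<lambda>k. p k + of_real (resolvent_delta \<phi> k))
     (\<lambda>k. of_real (\<phi> (norm k)) * p k - of_real (resolvent_delta \<phi> k))"

locale radial_mult_delta = radial_mult +
  assumes square_integrable_resolvent_delta:
    "integrable lebesgue (\<lambda>k::real^'n. (resolvent_delta \<phi> k)\<^sup>2)"
begin

lemma L2_resolvent_delta: "(\<lambda>k::real^'n. c * of_real (resolvent_delta \<phi> k)) \<in> L2"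
proof -
  have "(\<lambda>k::real^'n. complex_of_real (resolvent_delta \<phi> k)) \<in> L2"
    unfolding L2_def using square_integrable_resolvent_delta by simp
  then show ?thesis by (rule L2_mult_left)
qed

lemma L2_mult_dom_plus_resolvent_delta:
  "f \<in> mult_dom \<phi> \<Longrightarrow> (\<lambda>k::real^'n. f k + c * of_real (resolvent_delta \<phi> k)) \<in> L2"
  by (intro L2_add mult_dom_imp_L2 L2_resolvent_delta)

lemma L2_mult_op_minus_resolvent_delta:
  "f \<in> mult_dom \<phi> \<Longrightarrow> (\<lambda>k::real^'n. of_real (\<phi> (norm k)) * f k - c * of_real (resolvent_delta \<phi> k)) \<in> L2"
  by (intro L2_diff mult_dom_imp_L2_phi L2_resolvent_delta)

lemma mult_dom_integrable:
  fixes f :: "real^'n \<Rightarrow> complex"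
  assumes f: "f \<in> mult_dom \<phi>"
  shows "integrable lebesgue f"
proof -
  have "integrable lebesgue (\<lambda>k. (cmod (of_real (1 + \<phi> (norm k)) * f k))\<^sup>2 + (resolvent_delta \<phi> k)\<^sup>2)"
    using L2_integrable_square[OF mult_dom_imp_L2_one_plus_phi[OF f]] square_integrable_resolvent_delta
    by simp
  then show ?thesis
  proof (rule Bochner_Integration.integrable_bound)
    show "f \<in> borel_measurable lebesgue"
      using f by (simp add: mult_dom_iff L2_borel_measurable)
    show "AE k in lebesgue. norm (f k) \<le> norm ((cmod (of_real (1 + \<phi> (norm k)) * f k))\<^sup>2 + (resolvent_delta \<phi> k)\<^sup>2)"
    proof (intro AE_I2)
      fix k
      \<comment> \<open>\<open>|f| = (1 + \<phi>) |f| \<cdot> e\<close>, then AM-GM\<close>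
      have "norm (f k) = ((1 + \<phi> (norm k)) * cmod (f k)) * resolvent_delta \<phi> k"
        using phi_norm_nonneg[of k] by (simp add: resolvent_delta_def)
      also have "\<dots> \<le> ((1 + \<phi> (norm k)) * cmod (f k))\<^sup>2 + (resolvent_delta \<phi> k)\<^sup>2"
      proof -
        have "0 \<le> (1 + \<phi> (norm k)) * cmod (f k)"
          using phi_norm_nonneg[of k] by simp
        from mult_nonneg_nonneg[OF this less_imp_le[OF resolvent_delta_pos[of k]]]
        show ?thesis
          using sum_squares_bound[of "(1 + \<phi> (norm k)) * cmod (f k)" "resolvent_delta \<phi> k"] by linarith
      qed
      finally show "norm (f k) \<le> norm ((cmod (of_real (1 + \<phi> (norm k)) * f k))\<^sup>2 + (resolvent_delta \<phi> k)\<^sup>2)"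
        by (simp add: norm_mult power_mult_distrib)
    qed
  qed
qed

lemma boundary_form:
  fixes f0 g0 :: "real^'n \<Rightarrow> complex"
  assumes f0: "f0 \<in> mult_dom \<phi>" and g0: "g0 \<in> mult_dom \<phi>"
  shows "L2_inner (\<lambda>k. of_real (\<phi> (norm k)) * f0 k - d * of_real (resolvent_delta \<phi> k))
        (\<lambda>k. g0 k + c * of_real (resolvent_delta \<phi> k))
      - L2_inner (\<lambda>k. f0 k + d * of_real (resolvent_delta \<phi> k))
        (\<lambda>k. of_real (\<phi> (norm k)) * g0 k - c * of_real (resolvent_delta \<phi> k))
      = c * cnj (integral\<^sup>L lebesgue f0) - cnj d * integral\<^sup>L lebesgue g0"
proof -
  have pointwise: "cnj (of_real (\<phi> (norm k)) * f0 k - d * of_real (resolvent_delta \<phi> k)) * (g0 k + c * of_real (resolvent_delta \<phi> k))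
      - cnj (f0 k + d * of_real (resolvent_delta \<phi> k)) * (of_real (\<phi> (norm k)) * g0 k - c * of_real (resolvent_delta \<phi> k))
      = c * cnj (f0 k) - cnj d * g0 k" for k
  proof -
    have "cnj (of_real (\<phi> (norm k)) * f0 k - d * of_real (resolvent_delta \<phi> k)) * (g0 k + c * of_real (resolvent_delta \<phi> k))
      - cnj (f0 k + d * of_real (resolvent_delta \<phi> k)) * (of_real (\<phi> (norm k)) * g0 k - c * of_real (resolvent_delta \<phi> k))
      = (c * cnj (f0 k) - cnj d * g0 k) * ((1 + of_real (\<phi> (norm k))) * of_real (resolvent_delta \<phi> k))"
      by (simp add: algebra_simps)
    then show ?thesis by (simp only: one_plus_phi_mult_resolvent_delta mult_1_right)
  qed
  have "L2_inner (\<lambda>k. of_real (\<phi> (norm k)) * f0 k - d * of_real (resolvent_delta \<phi> k))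
        (\<lambda>k. g0 k + c * of_real (resolvent_delta \<phi> k))
      - L2_inner (\<lambda>k. f0 k + d * of_real (resolvent_delta \<phi> k))
        (\<lambda>k. of_real (\<phi> (norm k)) * g0 k - c * of_real (resolvent_delta \<phi> k))
      = (LINT k|lebesgue. c * cnj (f0 k) - cnj d * g0 k)"
    unfolding L2_inner_def pointwise[symmetric]
    using f0 g0 by (intro Bochner_Integration.integral_diff[symmetric] integrable_cnj_mult_L2
        L2_mult_dom_plus_resolvent_delta L2_mult_op_minus_resolvent_delta)
  also have "\<dots> = c * cnj (integral\<^sup>L lebesgue f0) - cnj d * integral\<^sup>L lebesgue g0"
    using mult_dom_integrable[OF f0] mult_dom_integrable[OF g0] by simp
  finally show ?thesis .
qed

lemma singular_extI:
  fixes g0 :: "real^'n \<Rightarrow> complex"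
  assumes "g0 \<in> mult_dom \<phi>" "integral\<^sup>L lebesgue g0 = of_real \<theta> * c"
  shows "(\<lambda>k. g0 k + c * of_real (resolvent_delta \<phi> k),
      \<lambda>k. of_real (\<phi> (norm k)) * g0 k - c * of_real (resolvent_delta \<phi> k)) \<in> singular_ext \<phi> \<theta>"
  unfolding singular_ext_def using assms
  by (auto intro!: L2_mult_dom_plus_resolvent_delta L2_mult_op_minus_resolvent_delta)

lemma singular_extE:
  fixes g h :: "real^'n \<Rightarrow> complex"
  assumes "(g, h) \<in> singular_ext \<phi> \<theta>"
  obtains g0 c where "g \<in> L2" "h \<in> L2" "g0 \<in> mult_dom \<phi>" "integral\<^sup>L lebesgue g0 = of_real \<theta> * c"
    "AE k in lebesgue. g k = g0 k + c * of_real (resolvent_delta \<phi> k)"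
    "AE k in lebesgue. h k = of_real (\<phi> (norm k)) * g0 k - c * of_real (resolvent_delta \<phi> k)"
  using assms unfolding singular_ext_def by auto

lemma mult_op0_subset_singular_ext: "mult_op0 \<phi> \<subseteq> (singular_ext \<phi> \<theta> :: ((real^'n \<Rightarrow> complex) \<times> _) set)"
proof safe
  fix f u :: "real^'n \<Rightarrow> complex"
  assume "(f, u) \<in> mult_op0 \<phi>"
  then have "(f, u) \<in> mult_op \<phi>" and "integral\<^sup>L lebesgue f = 0"
    unfolding mult_op0_def by auto
  then show "(f, u) \<in> singular_ext \<phi> \<theta>"
    unfolding singular_ext_def using mult_opD[of f u] mult_dom_imp_L2
    by (auto intro!: exI[of _ f] exI[of _ 0])
qed

lemma singular_ext_subset_adjoint:
  "singular_ext \<phi> \<theta> \<subseteq> adjoint_op (singular_ext \<phi> \<theta> :: ((real^'n \<Rightarrow> complex) \<times> _) set)"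
proof safe
  fix g h :: "real^'n \<Rightarrow> complex"
  assume "(g, h) \<in> singular_ext \<phi> \<theta>"
  then obtain g0 c where g: "g \<in> L2" "h \<in> L2" "g0 \<in> mult_dom \<phi>" "integral\<^sup>L lebesgue g0 = of_real \<theta> * c"
    "AE k in lebesgue. g k = g0 k + c * of_real (resolvent_delta \<phi> k)"
    "AE k in lebesgue. h k = of_real (\<phi> (norm k)) * g0 k - c * of_real (resolvent_delta \<phi> k)"
    by (rule singular_extE)
  have "L2_inner u g = L2_inner f h" if "(f, u) \<in> singular_ext \<phi> \<theta>" for f u :: "real^'n \<Rightarrow> complex"
  proof -
    from that obtain f0 d where f: "f \<in> L2" "u \<in> L2" "f0 \<in> mult_dom \<phi>" "integral\<^sup>L lebesgue f0 = of_real \<theta> * d"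
      "AE k in lebesgue. f k = f0 k + d * of_real (resolvent_delta \<phi> k)"
      "AE k in lebesgue. u k = of_real (\<phi> (norm k)) * f0 k - d * of_real (resolvent_delta \<phi> k)"
      by (rule singular_extE)
    have "L2_inner u g - L2_inner f h =
        L2_inner (\<lambda>k. of_real (\<phi> (norm k)) * f0 k - d * of_real (resolvent_delta \<phi> k))
          (\<lambda>k. g0 k + c * of_real (resolvent_delta \<phi> k))
      - L2_inner (\<lambda>k. f0 k + d * of_real (resolvent_delta \<phi> k))
          (\<lambda>k. of_real (\<phi> (norm k)) * g0 k - c * of_real (resolvent_delta \<phi> k))"
      using f g by (intro arg_cong2[where f=minus] L2_inner_cong_AE)
        (auto intro: L2_mult_dom_plus_resolvent_delta L2_mult_op_minus_resolvent_delta)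
    also have "\<dots> = c * cnj (integral\<^sup>L lebesgue f0) - cnj d * integral\<^sup>L lebesgue g0"
      by (rule boundary_form[OF f(3) g(3)])
    also have "\<dots> = 0"
      using f(4) g(4) by simp
    finally show ?thesis by simp
  qed
  with g(1,2) show "(g, h) \<in> adjoint_op (singular_ext \<phi> \<theta>)"
    unfolding adjoint_op_def by blast
qed

lemma adjoint_singular_ext_subset:
  "adjoint_op (singular_ext \<phi> \<theta>) \<subseteq> (singular_ext \<phi> \<theta> :: ((real^'n \<Rightarrow> complex) \<times> _) set)"
proof safe
  fix g h :: "real^'n \<Rightarrow> complex"
  assume gh: "(g, h) \<in> adjoint_op (singular_ext \<phi> \<theta>)"
  then have "(g, h) \<in> adjoint_op (mult_op0 \<phi>)"
    using adjoint_op_antimono[OF mult_op0_subset_singular_ext] by blast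
  then obtain g0 c where g0: "g0 \<in> mult_dom \<phi>" and g: "\<And>k. g k = g0 k + c * of_real (resolvent_delta \<phi> k)"
    and h: "AE k in lebesgue. h k = of_real (\<phi> (norm k)) * g0 k - c * of_real (resolvent_delta \<phi> k)"
    by (rule adjoint_mult_op0_decompose) blast
  obtain q :: "real^'n \<Rightarrow> complex" where q: "q \<in> mult_dom \<phi>" "integral\<^sup>L lebesgue q = of_real \<theta>"
    using mult_dom_integral_surj by blast
  have "(\<lambda>k. q k + 1 * of_real (resolvent_delta \<phi> k),
      \<lambda>k. of_real (\<phi> (norm k)) * q k - 1 * of_real (resolvent_delta \<phi> k)) \<in> singular_ext \<phi> \<theta>"
    using q by (intro singular_extI) simp_all
  from adjoint_opD(3)[OF gh this]
  have "0 = L2_inner (\<lambda>k. of_real (\<phi> (norm k)) * q k - 1 * of_real (resolvent_delta \<phi> k)) g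
      - L2_inner (\<lambda>k. q k + 1 * of_real (resolvent_delta \<phi> k)) h"
    by simp
  also have "\<dots> = L2_inner (\<lambda>k. of_real (\<phi> (norm k)) * q k - 1 * of_real (resolvent_delta \<phi> k))
        (\<lambda>k. g0 k + c * of_real (resolvent_delta \<phi> k))
      - L2_inner (\<lambda>k. q k + 1 * of_real (resolvent_delta \<phi> k))
        (\<lambda>k. of_real (\<phi> (norm k)) * g0 k - c * of_real (resolvent_delta \<phi> k))"
    using adjoint_opD(1,2)[OF gh] q g0 g h
    by (intro arg_cong2[where f=minus] L2_inner_cong_AE)
      (auto intro: L2_mult_dom_plus_resolvent_delta L2_mult_op_minus_resolvent_delta
        L2_mult_dom_plus_resolvent_delta[of _ 1, simplified] L2_mult_op_minus_resolvent_delta[of _ 1, simplified])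
  also have "\<dots> = c * cnj (integral\<^sup>L lebesgue q) - cnj 1 * integral\<^sup>L lebesgue g0"
    by (rule boundary_form[OF q(1) g0])
  finally have "integral\<^sup>L lebesgue g0 = of_real \<theta> * c"
    using q(2) by (simp add: mult.commute)
  then show "(g, h) \<in> singular_ext \<phi> \<theta>"
    unfolding singular_ext_def using adjoint_opD(1,2)[OF gh] g0 g h
    by (auto intro!: exI[of _ g0] exI[of _ c])
qed

lemma singular_ext_single_valued:
  fixes g h g' h' :: "real^'n \<Rightarrow> complex"
  assumes "(g, h) \<in> singular_ext \<phi> \<theta>" "(g', h') \<in> singular_ext \<phi> \<theta>" "AE k in lebesgue. g k = g' k"
  shows "AE k in lebesgue. h k = h' k"
proof -
  obtain g0 c where g: "g0 \<in> mult_dom \<phi>"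
    "AE k in lebesgue. g k = g0 k + c * of_real (resolvent_delta \<phi> k)"
    "AE k in lebesgue. h k = of_real (\<phi> (norm k)) * g0 k - c * of_real (resolvent_delta \<phi> k)"
    using assms(1) by (rule singular_extE)
  obtain g0' c' where g': "g0' \<in> mult_dom \<phi>"
    "AE k in lebesgue. g' k = g0' k + c' * of_real (resolvent_delta \<phi> k)"
    "AE k in lebesgue. h' k = of_real (\<phi> (norm k)) * g0' k - c' * of_real (resolvent_delta \<phi> k)"
    using assms(2) by (rule singular_extE)
  have "AE k in lebesgue. g0 k - g0' k = (c' - c) * of_real (resolvent_delta \<phi> k)"
    using assms(3) g(2) g'(2) by eventually_elim (simp add: algebra_simps)
  then have "c' - c = 0"
    by (rule resolvent_delta_notin_mult_dom[OF mult_dom_diff[OF g(1) g'(1)]])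
  then have c: "c' = c" by simp
  show ?thesis
    using assms(3) g(2,3) g'(2,3) by eventually_elim (simp add: c)
qed

lemma self_adjoint_singular_ext: "self_adjoint_op (singular_ext \<phi> \<theta> :: ((real^'n \<Rightarrow> complex) \<times> _) set)"
proof -
  have "singular_ext \<phi> \<theta> \<subseteq> (L2 :: (real^'n \<Rightarrow> complex) set) \<times> L2"
    by (auto elim: singular_extE)
  then have "is_operator (singular_ext \<phi> \<theta> :: ((real^'n \<Rightarrow> complex) \<times> _) set)"
    unfolding is_operator_def using singular_ext_single_valued by blast
  then show ?thesis
    unfolding self_adjoint_op_def
    using singular_ext_subset_adjoint adjoint_singular_ext_subset by blast
qed

lemma singular_ext_ne_mult_op: "singular_ext \<phi> \<theta> \<noteq> (mult_op \<phi> :: ((real^'n \<Rightarrow> complex) \<times> _) set)"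
proof
  assume eq: "singular_ext \<phi> \<theta> = (mult_op \<phi> :: ((real^'n \<Rightarrow> complex) \<times> _) set)"
  obtain q :: "real^'n \<Rightarrow> complex" where q: "q \<in> mult_dom \<phi>" "integral\<^sup>L lebesgue q = of_real \<theta>"
    using mult_dom_integral_surj by blast
  have "(\<lambda>k. q k + 1 * of_real (resolvent_delta \<phi> k),
      \<lambda>k. of_real (\<phi> (norm k)) * q k - 1 * of_real (resolvent_delta \<phi> k)) \<in> singular_ext \<phi> \<theta>"
    using q by (intro singular_extI) simp_all
  then have "(\<lambda>k. q k + 1 * of_real (resolvent_delta \<phi> k)) \<in> mult_dom \<phi>"
    using eq mult_opD(1) by blast
  from mult_dom_diff[OF this q(1)] have "(1::complex) = 0"
    by (rule resolvent_delta_notin_mult_dom) simp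
  then show False by simp
qed

lemma ext_energy_ge:
  fixes p :: "real^'n \<Rightarrow> complex" and w :: "real^'n \<Rightarrow> real"
  assumes p: "p \<in> mult_dom \<phi>" and w: "integrable lebesgue w"
    and density: "AE k in lebesgue. \<forall>z. s * Re z - w k \<le>
      Re (cnj (z + of_real (resolvent_delta \<phi> k)) * (of_real (\<phi> (norm k)) * z - of_real (resolvent_delta \<phi> k)))"
  shows "s * Re (integral\<^sup>L lebesgue p) - integral\<^sup>L lebesgue w \<le> Re (ext_energy \<phi> p)"
proof -
  have integrable: "integrable lebesgue (\<lambda>k. cnj (p k + of_real (resolvent_delta \<phi> k)) *
      (of_real (\<phi> (norm k)) * p k - of_real (resolvent_delta \<phi> k)))"
    using p by (intro integrable_cnj_mult_L2 L2_mult_dom_plus_resolvent_delta[of _ 1, simplified]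
        L2_mult_op_minus_resolvent_delta[of _ 1, simplified])
  have "s * Re (integral\<^sup>L lebesgue p) - integral\<^sup>L lebesgue w = (LINT k|lebesgue. s * Re (p k) - w k)"
    using mult_dom_integrable[OF p] w by simp
  also have "\<dots> \<le> (LINT k|lebesgue. Re (cnj (p k + of_real (resolvent_delta \<phi> k)) *
      (of_real (\<phi> (norm k)) * p k - of_real (resolvent_delta \<phi> k))))"
  proof (rule integral_mono_AE)
    show "integrable lebesgue (\<lambda>k. s * Re (p k) - w k)"
      using mult_dom_integrable[OF p] w by simp
    show "integrable lebesgue (\<lambda>k. Re (cnj (p k + of_real (resolvent_delta \<phi> k)) *
        (of_real (\<phi> (norm k)) * p k - of_real (resolvent_delta \<phi> k))))"
      using integrable by (rule integrable_Re)
    show "AE k in lebesgue. s * Re (p k) - w k \<le> Re (cnj (p k + of_real (resolvent_delta \<phi> k)) *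
        (of_real (\<phi> (norm k)) * p k - of_real (resolvent_delta \<phi> k)))"
      using density by eventually_elim blast
  qed
  also have "\<dots> = Re (ext_energy \<phi> p)"
    unfolding ext_energy_def L2_inner_def by (rule integral_Re[OF integrable])
  finally show ?thesis .
qed

lemma nonneg_singular_ext:
  assumes energy: "\<And>p :: real^'n \<Rightarrow> complex. p \<in> mult_dom \<phi> \<Longrightarrow> integral\<^sup>L lebesgue p = of_real \<theta> \<Longrightarrow> 0 \<le> Re (ext_energy \<phi> p)"
  shows "nonneg_op (singular_ext \<phi> \<theta> :: ((real^'n \<Rightarrow> complex) \<times> _) set)"
  unfolding nonneg_op_def
proof safe
  fix g h :: "real^'n \<Rightarrow> complex"
  assume "(g, h) \<in> singular_ext \<phi> \<theta>"
  then obtain g0 c where g: "g \<in> L2" "h \<in> L2" "g0 \<in> mult_dom \<phi>" "integral\<^sup>L lebesgue g0 = of_real \<theta> * c"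
    "AE k in lebesgue. g k = g0 k + c * of_real (resolvent_delta \<phi> k)"
    "AE k in lebesgue. h k = of_real (\<phi> (norm k)) * g0 k - c * of_real (resolvent_delta \<phi> k)"
    by (rule singular_extE)
  have "L2_inner g h = L2_inner (\<lambda>k. g0 k + c * of_real (resolvent_delta \<phi> k))
      (\<lambda>k. of_real (\<phi> (norm k)) * g0 k - c * of_real (resolvent_delta \<phi> k))"
    using g by (intro L2_inner_cong_AE L2_mult_dom_plus_resolvent_delta L2_mult_op_minus_resolvent_delta)
  also have "0 \<le> Re \<dots>"
  proof (cases "c = 0")
    case True
    then show ?thesis
      using nonneg_mult_op mult_opI[OF g(3)] unfolding nonneg_op_def by auto
  next
    case False
    define p where "p k = g0 k / c" for k
    have p_dom: "p \<in> mult_dom \<phi>"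
      unfolding p_def divide_inverse mult.commute[of _ "inverse c"] by (rule mult_dom_mult_left[OF g(3)])
    have "integral\<^sup>L lebesgue p = of_real \<theta>"
      unfolding p_def using g(4) False by simp
    from energy[OF p_dom this] have "0 \<le> Re (ext_energy \<phi> p)" .
    moreover have "L2_inner (\<lambda>k. g0 k + c * of_real (resolvent_delta \<phi> k))
        (\<lambda>k. of_real (\<phi> (norm k)) * g0 k - c * of_real (resolvent_delta \<phi> k)) =
      L2_inner (\<lambda>k. c * (p k + of_real (resolvent_delta \<phi> k)))
        (\<lambda>k. c * (of_real (\<phi> (norm k)) * p k - of_real (resolvent_delta \<phi> k)))"
      using False by (simp add: p_def algebra_simps)
    ultimately show ?thesis
      by (simp add: L2_inner_mult_both ext_energy_def)
  qed
  finally show "0 \<le> Re (L2_inner g h)" .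
qed

lemma nonneg_singular_ext_minus_integral:
  assumes "integrable lebesgue (resolvent_delta \<phi> :: real^'n \<Rightarrow> real)"
  shows "nonneg_op (singular_ext \<phi> (- integral\<^sup>L lebesgue (resolvent_delta \<phi> :: real^'n \<Rightarrow> real)) ::
    ((real^'n \<Rightarrow> complex) \<times> _) set)"
proof (rule nonneg_singular_ext)
  have density: "AE k::real^'n in lebesgue. \<forall>z. -1 * Re z - resolvent_delta \<phi> k \<le>
      Re (cnj (z + of_real (resolvent_delta \<phi> k)) * (of_real (\<phi> (norm k)) * z - of_real (resolvent_delta \<phi> k)))"
    by (intro AE_I2 allI)
      (use Re_energy_density_ge_neg[OF one_plus_phi_mult_resolvent_delta_real phi_norm_nonneg] in simp)
  fix p :: "real^'n \<Rightarrow> complex"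
  assume "p \<in> mult_dom \<phi>"
    and "integral\<^sup>L lebesgue p = of_real (- integral\<^sup>L lebesgue (resolvent_delta \<phi> :: real^'n \<Rightarrow> real))"
  then show "0 \<le> Re (ext_energy \<phi> p)"
    using ext_energy_ge[OF _ assms density, of p] by simp
qed

lemma nonneg_singular_ext_integral_div:
  assumes "integrable lebesgue (\<lambda>k::real^'n. resolvent_delta \<phi> k / \<phi> (norm k))"
    and pos: "AE k in lebesgue. 0 < \<phi> (norm (k::real^'n))"
  shows "nonneg_op (singular_ext \<phi> (LINT k::real^'n|lebesgue. resolvent_delta \<phi> k / \<phi> (norm k)) ::
    ((real^'n \<Rightarrow> complex) \<times> _) set)"
proof (rule nonneg_singular_ext)
  have density: "AE k::real^'n in lebesgue. \<forall>z. 1 * Re z - resolvent_delta \<phi> k / \<phi> (norm k) \<le>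
      Re (cnj (z + of_real (resolvent_delta \<phi> k)) * (of_real (\<phi> (norm k)) * z - of_real (resolvent_delta \<phi> k)))"
    using pos
  proof eventually_elim
    case (elim k)
    show ?case
      using Re_energy_density_ge_pos[OF one_plus_phi_mult_resolvent_delta_real elim] by simp
  qed
  fix p :: "real^'n \<Rightarrow> complex"
  assume "p \<in> mult_dom \<phi>"
    and "integral\<^sup>L lebesgue p = of_real (LINT k::real^'n|lebesgue. resolvent_delta \<phi> k / \<phi> (norm k))"
  then show "0 \<le> Re (ext_energy \<phi> p)"
    using ext_energy_ge[OF _ assms(1) density, of p] by simp
qed

subsection \<open>Uniqueness\<close>

lemma exists_large_integral_resolvent_delta_div:
  assumes "\<not> integrable lebesgue (\<lambda>k::real^'n. resolvent_delta \<phi> k / \<phi> (norm k))"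
  obtains S :: "(real^'n) set" and r \<delta> :: real
  where "S \<in> sets lebesgue" "S \<subseteq> cball 0 r" "0 < \<delta>" "\<And>k. k \<in> S \<Longrightarrow> \<delta> \<le> \<phi> (norm k)"
    "C < (LINT k|lebesgue. resolvent_delta \<phi> k / \<phi> (norm k) * indicator S k)"
proof -
  define S where "S j = {k::real^'n. norm k \<le> real j + 1 \<and> 1 / (real j + 1) \<le> \<phi> (norm k)}" for j :: nat
  have S_sets: "S j \<in> sets lebesgue" for j
  proof -
    have "Measurable.pred lebesgue (\<lambda>k::real^'n. norm k \<le> real j + 1 \<and> 1 / (real j + 1) \<le> \<phi> (norm k))"
      by measurable
    then show ?thesis by (simp add: S_def pred_def)
  qed
  have pos: "0 < \<phi> (norm k)" and bound: "resolvent_delta \<phi> k / \<phi> (norm k) \<le> real j + 1"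
    if "k \<in> S j" for j k
  proof -
    have lower: "1 / (real j + 1) \<le> \<phi> (norm k)"
      using that by (simp add: S_def)
    show "0 < \<phi> (norm k)"
      by (rule order_less_le_trans[OF _ lower]) simp
    moreover have "1 \<le> (real j + 1) * \<phi> (norm k)"
      using lower by (simp add: field_simps)
    ultimately show "resolvent_delta \<phi> k / \<phi> (norm k) \<le> real j + 1"
      using resolvent_delta_le_1[of k] by (simp add: field_simps)
  qed
  have "(\<lambda>k. resolvent_delta \<phi> k / \<phi> (norm k)) \<in> borel_measurable lebesgue"
    by measurable
  moreover have "0 \<le> resolvent_delta \<phi> k / \<phi> (norm k)" for k
    using resolvent_delta_pos[of k] phi_norm_nonneg[of k] by simp
  moreover have "incseq S"
  proof (intro incseq_SucI subsetI)
    fix j k assume "k \<in> S j"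
    moreover have "1 / (real (Suc j) + 1) \<le> 1 / (real j + 1)"
      by (simp add: frac_le)
    ultimately show "k \<in> S (Suc j)"
      by (auto simp: S_def)
  qed
  moreover have "\<exists>j. k \<in> S j" if "resolvent_delta \<phi> k / \<phi> (norm k) \<noteq> 0" for k
  proof -
    have "0 < \<phi> (norm k)"
      using that phi_norm_nonneg[of k] by (cases "\<phi> (norm k) = 0") auto
    moreover have "max (norm k) (1 / \<phi> (norm k)) \<le> real (nat \<lceil>max (norm k) (1 / \<phi> (norm k))\<rceil>)"
      by (rule real_nat_ceiling_ge)
    ultimately have "k \<in> S (nat \<lceil>max (norm k) (1 / \<phi> (norm k))\<rceil>)"
      by (auto simp: S_def field_simps)
    then show ?thesis ..
  qed
  moreover have "integrable lebesgue (\<lambda>k. resolvent_delta \<phi> k / \<phi> (norm k) * indicator (S j) k)" for j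
  proof (rule integrableI_bounded_set[where A = "S j" and B = "real j + 1"])
    have "S j \<in> lmeasurable"
      using S_sets by (intro bounded_set_imp_lmeasurable) (auto simp: S_def bounded_iff)
    then show "emeasure lebesgue (S j) < \<infinity>"
      unfolding fmeasurable_def by blast
    show "AE k in lebesgue. k \<in> S j \<longrightarrow>
        norm (resolvent_delta \<phi> k / \<phi> (norm k) * indicator (S j) k) \<le> real j + 1"
    proof (intro AE_I2 impI)
      fix k assume "k \<in> S j"
      with bound[OF this] pos[OF this] resolvent_delta_pos[of k]
      show "norm (resolvent_delta \<phi> k / \<phi> (norm k) * indicator (S j) k) \<le> real j + 1"
        by simp
    qed
  qed (use S_sets in auto)
  ultimately obtain j where "C < (LINT k|lebesgue. resolvent_delta \<phi> k / \<phi> (norm k) * indicator (S j) k)"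
    by (rule unbounded_integrals_of_exhaustion[OF assms _ S_sets]) blast+
  then show thesis
    using S_sets[of j] by (intro that[of "S j" "real j + 1" "1 / (real j + 1)"]) (auto simp: S_def)
qed

lemma not_integrable_inverse_phi_outside_ball:
  assumes "\<not> integrable lebesgue (resolvent_delta \<phi> :: real^'n \<Rightarrow> real)"
  shows "\<not> integrable lebesgue (\<lambda>k::real^'n. indicator {k. r < norm k \<and> 3 \<le> \<phi> (norm k)} k / \<phi> (norm k))"
proof
  define U where "U = {k::real^'n. r < norm k \<and> 3 \<le> \<phi> (norm k)}"
  assume "integrable lebesgue (\<lambda>k::real^'n. indicator {k. r < norm k \<and> 3 \<le> \<phi> (norm k)} k / \<phi> (norm k))"
  then have "integrable lebesgue (\<lambda>k. 4 * (resolvent_delta \<phi> k)\<^sup>2 + indicator (cball 0 r) k + indicator U k / \<phi> (norm k))"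
    using square_integrable_resolvent_delta lmeasurable_cball[of "0::real^'n" r]
    unfolding U_def by (intro Bochner_Integration.integrable_add) (auto simp: fmeasurable_def)
  then have "integrable lebesgue (resolvent_delta \<phi> :: real^'n \<Rightarrow> real)"
  proof (rule Bochner_Integration.integrable_bound)
    \<comment> \<open>\<open>e \<le> 4 e\<^sup>2\<close> where \<open>\<phi> < 3\<close>, \<open>e \<le> 1\<close> on the ball, and \<open>e \<le> 1 / \<phi>\<close> elsewhere\<close>
    show "AE k in lebesgue. norm (resolvent_delta \<phi> k) \<le>
        norm (4 * (resolvent_delta \<phi> k)\<^sup>2 + indicator (cball 0 r) k + indicator U k / \<phi> (norm k))"
    proof (intro AE_I2)
      fix k :: "real^'n"
      have e: "resolvent_delta \<phi> k = 1 / (1 + \<phi> (norm k))" "0 \<le> \<phi> (norm k)"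
        by (simp_all add: resolvent_delta_def phi_norm_nonneg)
      have "0 \<le> (indicator (cball 0 r) k :: real)" "0 \<le> indicator U k / \<phi> (norm k)"
        using e(2) by simp_all
      moreover have "resolvent_delta \<phi> k \<le> 4 * (resolvent_delta \<phi> k)\<^sup>2 \<or>
          resolvent_delta \<phi> k \<le> indicator (cball 0 r) k \<or> resolvent_delta \<phi> k \<le> indicator U k / \<phi> (norm k)"
      proof (cases "\<phi> (norm k) < 3")
        case True
        then have "1 \<le> 4 * resolvent_delta \<phi> k"
          unfolding e(1) using e(2) by (simp add: field_simps)
        then show ?thesis
          using resolvent_delta_pos[of k] by (simp add: power2_eq_square)
      next
        case large: False
        show ?thesis
        proof (cases "norm k \<le> r")
          case True
          then show ?thesis using resolvent_delta_le_1[of k] by simp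
        next
          case False
          then have "k \<in> U"
            using large by (simp add: U_def)
          moreover have "resolvent_delta \<phi> k \<le> 1 / \<phi> (norm k)"
            unfolding e(1) using large by (intro divide_left_mono) auto
          ultimately show ?thesis by simp
        qed
      qed
      ultimately have "resolvent_delta \<phi> k \<le> 4 * (resolvent_delta \<phi> k)\<^sup>2 + indicator (cball 0 r) k + indicator U k / \<phi> (norm k)"
        using zero_le_power2[of "resolvent_delta \<phi> k"] by linarith
      then show "norm (resolvent_delta \<phi> k) \<le>
          norm (4 * (resolvent_delta \<phi> k)\<^sup>2 + indicator (cball 0 r) k + indicator U k / \<phi> (norm k))"
        using resolvent_delta_pos[of k] by simp
    qed
  qed measurable
  with assms show False ..
qed

lemma exists_large_integral_inverse_phi:
  assumes "\<not> integrable lebesgue (resolvent_delta \<phi> :: real^'n \<Rightarrow> real)"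
  obtains S :: "(real^'n) set"
  where "S \<in> sets lebesgue" "bounded S" "\<And>k. k \<in> S \<Longrightarrow> r < norm k \<and> 3 \<le> \<phi> (norm k)"
    "C < (LINT k|lebesgue. indicator S k / \<phi> (norm k))"
proof -
  define U where "U = {k::real^'n. r < norm k \<and> 3 \<le> \<phi> (norm k)}"
  have U_sets: "U \<in> sets lebesgue"
  proof -
    have "Measurable.pred lebesgue (\<lambda>k::real^'n. r < norm k \<and> 3 \<le> \<phi> (norm k))"
      by measurable
    then show ?thesis by (simp add: U_def pred_def)
  qed
  have "\<not> integrable lebesgue (\<lambda>k. indicator U k / \<phi> (norm k))"
    using not_integrable_inverse_phi_outside_ball[OF assms] by (simp add: U_def)
  moreover have "(\<lambda>k. indicator U k / \<phi> (norm k)) \<in> borel_measurable lebesgue"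
    using U_sets by measurable
  moreover have "\<And>R. cball (0::real^'n) (real R) \<in> sets lebesgue"
    by simp
  moreover have "0 \<le> indicator U k / \<phi> (norm k)" for k :: "real^'n"
    using phi_norm_nonneg[of k] by simp
  moreover have "incseq (\<lambda>R::nat. cball (0::real^'n) (real R))"
    by (intro incseq_SucI) auto
  moreover have "\<exists>R. k \<in> cball 0 (real R)" for k :: "real^'n"
    using real_nat_ceiling_ge[of "norm k"] by (intro exI[of _ "nat \<lceil>norm k\<rceil>"]) simp
  moreover have "integrable lebesgue (\<lambda>k. indicator U k / \<phi> (norm k) * indicator (cball 0 (real R)) k)" for R :: nat
  proof (rule integrableI_bounded_set[where A = "cball 0 (real R)" and B = 1])
    show "emeasure lebesgue (cball (0::real^'n) (real R)) < \<infinity>"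
      using emeasure_lborel_cball_finite by (simp add: emeasure_completion)
    show "AE k in lebesgue. k \<in> cball 0 (real R) \<longrightarrow>
        norm (indicator U k / \<phi> (norm k) * indicator (cball 0 (real R)) k) \<le> 1"
      by (intro AE_I2) (simp add: U_def indicator_def)
  qed (use U_sets in auto)
  ultimately obtain R :: nat where "C < (LINT k|lebesgue. indicator U k / \<phi> (norm k) * indicator (cball 0 (real R)) k)"
    by (rule unbounded_integrals_of_exhaustion[where S = "\<lambda>R. cball 0 (real R)"]) blast+
  moreover have "(\<lambda>k. indicator U k / \<phi> (norm k) * indicator (cball 0 (real R)) k) =
      (\<lambda>k. indicator (U \<inter> cball 0 (real R)) k / \<phi> (norm k))"
    by (simp add: fun_eq_iff indicator_inter_arith)
  ultimately have "C < (LINT k|lebesgue. indicator (U \<inter> cball 0 (real R)) k / \<phi> (norm k))"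
    by simp
  then show thesis
    using U_sets by (intro that[of "U \<inter> cball 0 (real R)"]) (auto simp: U_def)
qed

lemma Re_energy_density_split_le:
  fixes k :: "real^'n"
  assumes A: "k \<in> A \<Longrightarrow> 0 < \<phi> (norm k)" and B: "k \<in> B \<Longrightarrow> 3 \<le> \<phi> (norm k)"
    and disjoint: "k \<notin> A \<or> k \<notin> B" and \<mu>: "Re \<mu> \<le> 0"
    and p: "p = of_real (resolvent_delta \<phi> k / \<phi> (norm k) * indicator A k) + \<mu> * of_real (indicator B k / \<phi> (norm k))"
  shows "Re (cnj (p + of_real (resolvent_delta \<phi> k)) * (of_real (\<phi> (norm k)) * p - of_real (resolvent_delta \<phi> k)))
    \<le> ((cmod \<mu>)\<^sup>2 + Re \<mu> / 2) * (indicator B k / \<phi> (norm k))"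
proof -
  consider "k \<in> A" "k \<notin> B" | "k \<notin> A" "k \<in> B" | "k \<notin> A" "k \<notin> B"
    using disjoint by blast
  then show ?thesis
  proof cases
    case 1
    then have "0 < \<phi> (norm k)"
      using A by blast
    with 1 have "of_real (\<phi> (norm k)) * p = of_real (resolvent_delta \<phi> k)"
      by (simp add: p)
    with 1 show ?thesis by simp
  next
    case 2
    then have "p = \<mu> / of_real (\<phi> (norm k))"
      by (simp add: p)
    with 2 show ?thesis
      using Re_energy_density_le[OF one_plus_phi_mult_resolvent_delta_real B \<mu>] by simp
  next
    case 3
    then show ?thesis by (simp add: p)
  qed
qed

lemma ext_energy_split:
  fixes S1 S2 :: "(real^'n) set"
  assumes S1: "S1 \<in> sets lebesgue" "bounded S1" "0 < \<delta>" "\<And>k. k \<in> S1 \<Longrightarrow> \<delta> \<le> \<phi> (norm k)"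
    and S2: "S2 \<in> sets lebesgue" "bounded S2" "\<And>k. k \<in> S2 \<Longrightarrow> 3 \<le> \<phi> (norm k)"
    and disjoint: "S1 \<inter> S2 = {}" and \<mu>: "Re \<mu> \<le> 0"
  obtains p :: "real^'n \<Rightarrow> complex" where "p \<in> mult_dom \<phi>"
    "integral\<^sup>L lebesgue p = of_real (LINT k|lebesgue. resolvent_delta \<phi> k / \<phi> (norm k) * indicator S1 k)
      + \<mu> * of_real (LINT k|lebesgue. indicator S2 k / \<phi> (norm k))"
    "Re (ext_energy \<phi> p) \<le> ((cmod \<mu>)\<^sup>2 + Re \<mu> / 2) * (LINT k|lebesgue. indicator S2 k / \<phi> (norm k))"
proof -
  define p1 where "p1 k = complex_of_real (resolvent_delta \<phi> k / \<phi> (norm k) * indicator S1 k)" for k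
  define p2 where "p2 k = complex_of_real (indicator S2 k / \<phi> (norm k))" for k
  define p where "p k = p1 k + \<mu> * p2 k" for k :: "real^'n"
  have e_abs: "\<bar>resolvent_delta \<phi> k\<bar> \<le> 1" for k
    using resolvent_delta_pos[of k] resolvent_delta_le_1[of k] by simp
  have p1_dom: "p1 \<in> mult_dom \<phi>"
    unfolding p1_def using mult_dom_div_phi_indicator[OF S1 borel_measurable_resolvent_delta e_abs] .
  have "p2 = (\<lambda>k. complex_of_real (1 / \<phi> (norm k) * indicator S2 k))"
    by (simp add: fun_eq_iff p2_def)
  then have p2_dom: "p2 \<in> mult_dom \<phi>"
    using mult_dom_div_phi_indicator[OF S2(1,2) _ S2(3), of "\<lambda>_. 1"] by simp
  have p_dom: "p \<in> mult_dom \<phi>"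
    unfolding p_def by (intro mult_dom_add mult_dom_mult_left p1_dom p2_dom)
  have "integral\<^sup>L lebesgue p = integral\<^sup>L lebesgue p1 + \<mu> * integral\<^sup>L lebesgue p2"
    using mult_dom_integrable[OF p1_dom] mult_dom_integrable[OF p2_dom] unfolding p_def by simp
  then have p_integral: "integral\<^sup>L lebesgue p =
      of_real (LINT k|lebesgue. resolvent_delta \<phi> k / \<phi> (norm k) * indicator S1 k)
      + \<mu> * of_real (LINT k|lebesgue. indicator S2 k / \<phi> (norm k))"
    unfolding p1_def p2_def integral_complex_of_real .
  have X_integrable: "integrable lebesgue (\<lambda>k. cnj (p k + of_real (resolvent_delta \<phi> k)) *
      (of_real (\<phi> (norm k)) * p k - of_real (resolvent_delta \<phi> k)))"
    using p_dom by (intro integrable_cnj_mult_L2 L2_mult_dom_plus_resolvent_delta[of _ 1, simplified]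
        L2_mult_op_minus_resolvent_delta[of _ 1, simplified])
  have "integrable lebesgue (\<lambda>k. indicator S2 k / \<phi> (norm k))"
    using mult_dom_integrable[OF p2_dom] unfolding p2_def complex_of_real_integrable_eq .
  then have density_integrable:
    "integrable lebesgue (\<lambda>k. ((cmod \<mu>)\<^sup>2 + Re \<mu> / 2) * (indicator S2 k / \<phi> (norm k)))"
    by (rule integrable_mult_right)
  have density: "Re (cnj (p k + of_real (resolvent_delta \<phi> k)) * (of_real (\<phi> (norm k)) * p k - of_real (resolvent_delta \<phi> k)))
      \<le> ((cmod \<mu>)\<^sup>2 + Re \<mu> / 2) * (indicator S2 k / \<phi> (norm k))" for k
  proof (rule Re_energy_density_split_le[where A = S1 and B = S2])
    show "0 < \<phi> (norm k)" if "k \<in> S1"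
      using S1(3) S1(4)[OF that] by linarith
    show "3 \<le> \<phi> (norm k)" if "k \<in> S2"
      using S2(3)[OF that] .
    show "k \<notin> S1 \<or> k \<notin> S2"
      using disjoint by blast
    show "p k = of_real (resolvent_delta \<phi> k / \<phi> (norm k) * indicator S1 k) + \<mu> * of_real (indicator S2 k / \<phi> (norm k))"
      by (simp add: p_def p1_def p2_def)
  qed (rule \<mu>)
  have "Re (ext_energy \<phi> p) = (LINT k|lebesgue. Re (cnj (p k + of_real (resolvent_delta \<phi> k)) *
      (of_real (\<phi> (norm k)) * p k - of_real (resolvent_delta \<phi> k))))"
    unfolding ext_energy_def L2_inner_def by (rule integral_Re[OF X_integrable, symmetric])
  also have "\<dots> \<le> (LINT k|lebesgue. ((cmod \<mu>)\<^sup>2 + Re \<mu> / 2) * (indicator S2 k / \<phi> (norm k)))"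
    by (rule integral_mono[OF integrable_Re[OF X_integrable] density_integrable density])
  also have "\<dots> = ((cmod \<mu>)\<^sup>2 + Re \<mu> / 2) * (LINT k|lebesgue. indicator S2 k / \<phi> (norm k))"
    by (rule integral_mult_right_zero)
  finally show thesis
    using that p_dom p_integral by blast
qed

lemma exists_negative_ext_energy:
  assumes div: "\<not> integrable lebesgue (\<lambda>k::real^'n. resolvent_delta \<phi> k / \<phi> (norm k))"
    and res: "\<not> integrable lebesgue (resolvent_delta \<phi> :: real^'n \<Rightarrow> real)"
  obtains p :: "real^'n \<Rightarrow> complex"
  where "p \<in> mult_dom \<phi>" "integral\<^sup>L lebesgue p = \<theta>" "Re (ext_energy \<phi> p) < 0"
proof -
  \<comment> \<open>\<open>p = e / \<phi>\<close> on \<open>S1\<close>, where the energy density vanishes, makes \<open>Re (\<integral> p)\<close> exceed \<open>Re \<theta>\<close>;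
    the correction \<open>\<mu> / \<phi>\<close> on the far set \<open>S2\<close> restores \<open>\<integral> p = \<theta>\<close> at a negative cost
    since \<open>\<integral>\<^sub>S\<^sub>2 1 / \<phi>\<close> is large.\<close>
  obtain S1 :: "(real^'n) set" and r \<delta> where S1: "S1 \<in> sets lebesgue" "S1 \<subseteq> cball 0 r" "0 < \<delta>"
      "\<And>k. k \<in> S1 \<Longrightarrow> \<delta> \<le> \<phi> (norm k)"
    and A1: "Re \<theta> + 2 < (LINT k|lebesgue. resolvent_delta \<phi> k / \<phi> (norm k) * indicator S1 k)"
    by (rule exists_large_integral_resolvent_delta_div[OF div, where C = "Re \<theta> + 2"]) blast
  define A1 where "A1 = (LINT k|lebesgue. resolvent_delta \<phi> k / \<phi> (norm k) * indicator S1 k)"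
  obtain S2 :: "(real^'n) set" where S2: "S2 \<in> sets lebesgue" "bounded S2"
      "\<And>k. k \<in> S2 \<Longrightarrow> r < norm k \<and> 3 \<le> \<phi> (norm k)"
    and B2: "2 * (cmod (\<theta> - of_real A1))\<^sup>2 + 1 < (LINT k|lebesgue. indicator S2 k / \<phi> (norm k))"
    by (rule exists_large_integral_inverse_phi[OF res, where C = "2 * (cmod (\<theta> - of_real A1))\<^sup>2 + 1" and r = r]) blast
  define B2 where "B2 = (LINT k|lebesgue. indicator S2 k / \<phi> (norm k))"
  have B2_pos: "0 < B2"
    using B2 zero_le_power2[of "cmod (\<theta> - of_real A1)"] unfolding B2_def by linarith
  define \<mu> where "\<mu> = (\<theta> - of_real A1) / of_real B2"
  have Re_\<mu>: "Re \<mu> * B2 = Re \<theta> - A1"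
    using B2_pos by (simp add: \<mu>_def)
  then have "Re \<mu> * B2 < 0"
    using A1 unfolding A1_def by linarith
  then have "Re \<mu> \<le> 0"
    using B2_pos by (simp add: mult_less_0_iff)
  have "bounded S1"
    using S1(2) by (rule bounded_subset[OF bounded_cball])
  have "norm k \<le> r" if "k \<in> S1" for k
    using S1(2) that by auto
  then have disjoint: "S1 \<inter> S2 = {}"
    using S2(3) by force
  have S2_phi: "\<And>k. k \<in> S2 \<Longrightarrow> 3 \<le> \<phi> (norm k)"
    using S2(3) by blast
  obtain p :: "real^'n \<Rightarrow> complex"
    where p: "p \<in> mult_dom \<phi>" "integral\<^sup>L lebesgue p = of_real A1 + \<mu> * of_real B2"
    "Re (ext_energy \<phi> p) \<le> ((cmod \<mu>)\<^sup>2 + Re \<mu> / 2) * B2"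
    unfolding A1_def B2_def
    by (rule ext_energy_split[OF S1(1) \<open>bounded S1\<close> S1(3,4) S2(1,2) S2_phi disjoint \<open>Re \<mu> \<le> 0\<close>]) blast
  have "(cmod \<mu>)\<^sup>2 * B2 = (cmod (\<theta> - of_real A1))\<^sup>2 / B2"
    using B2_pos by (simp add: \<mu>_def norm_divide power2_eq_square)
  also have "\<dots> < 1 / 2"
    using B2 B2_pos unfolding B2_def by (simp add: field_simps)
  finally have "((cmod \<mu>)\<^sup>2 + Re \<mu> / 2) * B2 < 0"
    using Re_\<mu> A1 unfolding A1_def by (simp add: algebra_simps)
  moreover have "of_real A1 + \<mu> * of_real B2 = \<theta>"
    using B2_pos by (simp add: \<mu>_def)
  ultimately show thesis
    using that p by fastforce
qed

lemma L2_inner_shift_eq_ext_energy: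
  fixes g h g0 p :: "real^'n \<Rightarrow> complex"
  assumes g: "g \<in> L2" "\<And>k. g k = g0 k + c * of_real (resolvent_delta \<phi> k)"
    and h: "h \<in> L2" "AE k in lebesgue. h k = of_real (\<phi> (norm k)) * g0 k - c * of_real (resolvent_delta \<phi> k)"
    and g0: "g0 \<in> mult_dom \<phi>" and p: "p \<in> mult_dom \<phi>"
  shows "L2_inner (\<lambda>k. g k + (c * p k - g0 k)) (\<lambda>k. h k + of_real (\<phi> (norm k)) * (c * p k - g0 k)) =
    of_real ((cmod c)\<^sup>2) * ext_energy \<phi> p"
proof -
  have f_dom: "(\<lambda>k. c * p k - g0 k) \<in> mult_dom \<phi>"
    by (intro mult_dom_diff mult_dom_mult_left p g0)
  have "L2_inner (\<lambda>k. g k + (c * p k - g0 k)) (\<lambda>k. h k + of_real (\<phi> (norm k)) * (c * p k - g0 k)) =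
      L2_inner (\<lambda>k. c * (p k + of_real (resolvent_delta \<phi> k)))
        (\<lambda>k. c * (of_real (\<phi> (norm k)) * p k - of_real (resolvent_delta \<phi> k)))"
  proof (rule L2_inner_cong_AE)
    show "(\<lambda>k. g k + (c * p k - g0 k)) \<in> L2" "(\<lambda>k. h k + of_real (\<phi> (norm k)) * (c * p k - g0 k)) \<in> L2"
      using g(1) h(1) f_dom by (auto intro: L2_add mult_dom_imp_L2 mult_dom_imp_L2_phi)
    show "(\<lambda>k. c * (p k + of_real (resolvent_delta \<phi> k))) \<in> L2"
      "(\<lambda>k. c * (of_real (\<phi> (norm k)) * p k - of_real (resolvent_delta \<phi> k))) \<in> L2"
      using p by (auto intro!: L2_mult_left L2_mult_dom_plus_resolvent_delta[of _ 1, simplified]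
          L2_mult_op_minus_resolvent_delta[of _ 1, simplified])
    show "AE k in lebesgue. g k + (c * p k - g0 k) = c * (p k + of_real (resolvent_delta \<phi> k))"
      by (simp add: g(2) algebra_simps)
    show "AE k in lebesgue. h k + of_real (\<phi> (norm k)) * (c * p k - g0 k) =
        c * (of_real (\<phi> (norm k)) * p k - of_real (resolvent_delta \<phi> k))"
      using h(2) by eventually_elim (simp add: algebra_simps)
  qed
  also have "\<dots> = of_real ((cmod c)\<^sup>2) * ext_energy \<phi> p"
    unfolding ext_energy_def by (rule L2_inner_mult_both)
  finally show ?thesis .
qed

lemma nonneg_extension_subset_mult_op:
  fixes T :: "((real^'n \<Rightarrow> complex) \<times> (real^'n \<Rightarrow> complex)) set"
  assumes div: "\<not> integrable lebesgue (\<lambda>k::real^'n. resolvent_delta \<phi> k / \<phi> (norm k))"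
    and res: "\<not> integrable lebesgue (resolvent_delta \<phi> :: real^'n \<Rightarrow> real)"
    and T: "T = adjoint_op T" "nonneg_op T" "mult_op0 \<phi> \<subseteq> T"
  shows "T \<subseteq> mult_op \<phi>"
proof safe
  fix g h :: "real^'n \<Rightarrow> complex"
  assume "(g, h) \<in> T"
  then have gh: "(g, h) \<in> adjoint_op T"
    unfolding T(1)[symmetric] .
  then have "(g, h) \<in> adjoint_op (mult_op0 \<phi>)"
    using adjoint_op_antimono[OF T(3)] by blast
  then obtain g0 c where g0: "g0 \<in> mult_dom \<phi>" and g: "\<And>k. g k = g0 k + c * of_real (resolvent_delta \<phi> k)"
    and h: "AE k in lebesgue. h k = of_real (\<phi> (norm k)) * g0 k - c * of_real (resolvent_delta \<phi> k)"
    by (rule adjoint_mult_op0_decompose) blast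
  have "c = 0"
  proof (rule ccontr)
    assume "c \<noteq> 0"
    \<comment> \<open>Adding \<open>c p - g0 \<in> D(A0)\<close> to \<open>g\<close> yields \<open>c (p + e)\<close>, on which \<open>T\<close> has negative energy.\<close>
    obtain p :: "real^'n \<Rightarrow> complex" where p: "p \<in> mult_dom \<phi>" "integral\<^sup>L lebesgue p = integral\<^sup>L lebesgue g0 / c"
      "Re (ext_energy \<phi> p) < 0"
      by (rule exists_negative_ext_energy[OF div res, where \<theta> = "integral\<^sup>L lebesgue g0 / c"]) blast
    have "adjoint_op T \<subseteq> L2 \<times> L2"
      unfolding adjoint_op_def by blast
    then have "T \<subseteq> L2 \<times> L2" "mult_op0 \<phi> \<subseteq> adjoint_op T"
      unfolding T(1)[symmetric] using T(3) by simp_all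
    moreover have "integral\<^sup>L lebesgue (\<lambda>k. c * p k - g0 k) = 0"
      using mult_dom_integrable[OF p(1)] mult_dom_integrable[OF g0] p(2) \<open>c \<noteq> 0\<close> by simp
    ultimately have "(\<lambda>k. c * p k - g0 k, \<lambda>k. of_real (\<phi> (norm k)) * (c * p k - g0 k)) \<in> adjoint_op T"
      using mult_op0I[OF mult_dom_diff[OF mult_dom_mult_left[OF p(1)] g0]] by blast
    from adjoint_op_add[OF \<open>T \<subseteq> L2 \<times> L2\<close> gh this]
    have "(\<lambda>k. g k + (c * p k - g0 k), \<lambda>k. h k + of_real (\<phi> (norm k)) * (c * p k - g0 k)) \<in> T"
      unfolding T(1)[symmetric] .
    then have "0 \<le> Re (of_real ((cmod c)\<^sup>2) * ext_energy \<phi> p)"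
      using T(2) L2_inner_shift_eq_ext_energy[OF adjoint_opD(1)[OF gh] g adjoint_opD(2)[OF gh] h g0 p(1)]
      unfolding nonneg_op_def by fastforce
    moreover have "(cmod c)\<^sup>2 * Re (ext_energy \<phi> p) < 0"
      using \<open>c \<noteq> 0\<close> p(3) by (simp add: mult_pos_neg)
    ultimately show False
      by simp
  qed
  then have "g = g0"
    using g by (simp add: fun_eq_iff)
  then show "(g, h) \<in> mult_op \<phi>"
    using g0 h \<open>c = 0\<close> adjoint_opD(2)[OF gh] unfolding mult_op_def by simp
qed

lemma nonneg_extension_eq_mult_op:
  fixes T :: "((real^'n \<Rightarrow> complex) \<times> (real^'n \<Rightarrow> complex)) set"
  assumes "\<not> integrable lebesgue (\<lambda>k::real^'n. resolvent_delta \<phi> k / \<phi> (norm k))"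
    and "\<not> integrable lebesgue (resolvent_delta \<phi> :: real^'n \<Rightarrow> real)"
    and T: "self_adjoint_op T" "nonneg_op T" "mult_op0 \<phi> \<subseteq> T"
  shows "T = mult_op \<phi>"
proof -
  have T_adj: "T = adjoint_op T"
    using T(1) unfolding self_adjoint_op_def by blast
  with assms T(2,3) have "T \<subseteq> mult_op \<phi>"
    by (intro nonneg_extension_subset_mult_op)
  moreover have "mult_op \<phi> \<subseteq> T"
    using self_adjoint_mult_op adjoint_op_antimono[OF \<open>T \<subseteq> mult_op \<phi>\<close>] T_adj
    unfolding self_adjoint_op_def by blast
  ultimately show ?thesis
    by blast
qed

lemma unique_nonneg_extension_iff:
  assumes pos: "AE k in lebesgue. 0 < \<phi> (norm (k::real^'n))"
  shows "(\<forall>T :: ((real^'n \<Rightarrow> complex) \<times> (real^'n \<Rightarrow> complex)) set.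
      self_adjoint_op T \<and> nonneg_op T \<and> mult_op0 \<phi> \<subseteq> T \<longrightarrow> T = mult_op \<phi>) \<longleftrightarrow>
    \<not> integrable lebesgue (\<lambda>k::real^'n. resolvent_delta \<phi> k / \<phi> (norm k)) \<and>
    \<not> integrable lebesgue (resolvent_delta \<phi> :: real^'n \<Rightarrow> real)"
proof
  assume unique: "\<forall>T :: ((real^'n \<Rightarrow> complex) \<times> (real^'n \<Rightarrow> complex)) set.
      self_adjoint_op T \<and> nonneg_op T \<and> mult_op0 \<phi> \<subseteq> T \<longrightarrow> T = mult_op \<phi>"
  have not_nonneg: "\<not> nonneg_op (singular_ext \<phi> \<theta> :: ((real^'n \<Rightarrow> complex) \<times> _) set)" for \<theta>
  proof
    assume "nonneg_op (singular_ext \<phi> \<theta> :: ((real^'n \<Rightarrow> complex) \<times> _) set)"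
    with self_adjoint_singular_ext mult_op0_subset_singular_ext
    have "singular_ext \<phi> \<theta> = (mult_op \<phi> :: ((real^'n \<Rightarrow> complex) \<times> _) set)"
      using unique by simp
    with singular_ext_ne_mult_op show False ..
  qed
  show "\<not> integrable lebesgue (\<lambda>k::real^'n. resolvent_delta \<phi> k / \<phi> (norm k)) \<and>
      \<not> integrable lebesgue (resolvent_delta \<phi> :: real^'n \<Rightarrow> real)"
    using not_nonneg nonneg_singular_ext_integral_div[OF _ pos] nonneg_singular_ext_minus_integral by metis
next
  assume "\<not> integrable lebesgue (\<lambda>k::real^'n. resolvent_delta \<phi> k / \<phi> (norm k)) \<and>
      \<not> integrable lebesgue (resolvent_delta \<phi> :: real^'n \<Rightarrow> real)"
  then show "\<forall>T :: ((real^'n \<Rightarrow> complex) \<times> (real^'n \<Rightarrow> complex)) set.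
      self_adjoint_op T \<and> nonneg_op T \<and> mult_op0 \<phi> \<subseteq> T \<longrightarrow> T = mult_op \<phi>"
    using nonneg_extension_eq_mult_op by simp
qed

end

theorem mainTheorem3:
  fixes \<phi> :: "real \<Rightarrow> real"
  assumes cont: "continuous_on {0..} \<phi>"
    and nonneg: "\<And>x. 0 \<le> x \<Longrightarrow> 0 \<le> \<phi> x"
    and pos_ae: "AE k in (lebesgue :: (real^'n) measure). \<phi> (norm k) > 0"
    and finite_int: "(\<integral>\<^sup>+ k\<in>{0<..}. ennreal (k ^ (CARD('n) - 1) / (1 + \<phi> k)\<^sup>2) \<partial>lborel) < \<infinity>"
  shows "(self_adjoint_op (mult_op \<phi> :: ((real^'n \<Rightarrow> complex) \<times> _) set) \<and> nonneg_op (mult_op \<phi> :: ((real^'n \<Rightarrow> complex) \<times> _) set)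
           \<and> mult_op0 \<phi> \<subseteq> (mult_op \<phi> :: ((real^'n \<Rightarrow> complex) \<times> _) set)
           \<and> (\<forall>T :: ((real^'n \<Rightarrow> complex) \<times> (real^'n \<Rightarrow> complex)) set.
                 self_adjoint_op T \<and> nonneg_op T \<and> mult_op0 \<phi> \<subseteq> T \<longrightarrow> T = mult_op \<phi>))
     \<longleftrightarrow>
         ((\<integral>\<^sup>+ k\<in>{0<..}. ennreal (k ^ (CARD('n) - 1) / (\<phi> k * (1 + \<phi> k))) \<partial>lborel) = \<infinity>
          \<and> (\<integral>\<^sup>+ k\<in>{0<..}. ennreal (k ^ (CARD('n) - 1) / (1 + \<phi> k)) \<partial>lborel) = \<infinity>)"
proof -
  interpret radial_mult \<phi>
    using cont nonneg by unfold_locales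
  interpret radial_mult_delta \<phi>
    using finite_int square_integrable_resolvent_delta_iff[where 'n='n] by unfold_locales simp
  show ?thesis
    using self_adjoint_mult_op nonneg_mult_op mult_op0_subset_mult_op unique_nonneg_extension_iff[OF pos_ae]
    unfolding integrable_resolvent_delta_div_iff integrable_resolvent_delta_iff infinity_ennreal_def less_top[symmetric]
    by blast
qed

end
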